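(* Let $(X_n)$ be i.i.d. non-lattice real random variables distributed as $X$ with $\mathbb{P}(X<0)>0$, and let $(Y_n)$ be i.i.d., independent of $(X_n)$, with $\mathbb{P}(Y_1=1)=p=1-\mathbb{P}(Y_1=-1)$, $p\in[0,1)$. Assume $X\in\mathcal{S}(\gamma)$ for some $\gamma>0$ and $\varphi(\gamma)=\mathbb{E}[e^{\gamma X}]<1/p$. Let $W$ have the stationary distribution of $W_{n+1}=(Y_nW_n+X_n)^+$, i.e. $W\stackrel{D}{=}(YW+X)^+$ with $W,Y,X$ independent. Let $E_\gamma$ be exponential with parameter $\gamma$, with $X,W,E_\gamma$ independent. Then \[\mathbb{P}(W>x)\sim C_\gamma\,\mathbb{P}(X>x)\quad(x\to\infty),\] where \[C_\gamma=\frac{(1-p)p}{(1-p\varphi(\gamma))^2}\Big[\mathbb{P}(X-W+E_\gamma\le0)+\frac{p}{1-p}\mathbb{P}(X+W+E_\gamma\le0)\Big]+\frac{1-p}{(1-p\varphi(\gamma))^2}\mathbb{E}[e^{-\gamma W}].\]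
   Context: $X\in\mathcal{S}(\gamma)$ means: $\mathbb{P}(X>x+y)/\mathbb{P}(X>x)\to e^{-\gamma y}$ as $x\to\infty$ for each fixed $y$, and $\mathbb{P}(X_1+X_2>x)\sim 2\mathbb{E}[e^{\gamma X}]\mathbb{P}(X>x)$ for independent copies $X_1,X_2$. $f\sim g$ means $f(x)/g(x)\to1$. *)

theory Defs
  imports "HOL-Probability.Probability" "HOL-Library.Landau_Symbols"
begin

definition lattice_law :: "real measure \<Rightarrow> bool" where
  "lattice_law \<mu> \<longleftrightarrow>
     (\<exists>a h. h > 0 \<and> measure \<mu> {x. \<exists>k::int. x = a + of_int k * h} = 1)"

definition class_S :: "real \<Rightarrow> real measure \<Rightarrow> bool" where
  "class_S \<gamma> \<mu> \<longleftrightarrow>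
     (\<forall>y. ((\<lambda>x. measure \<mu> {x + y<..} / measure \<mu> {x<..}) \<longlongrightarrow> exp (- \<gamma> * y)) at_top)
     \<and> integrable \<mu> (\<lambda>x. exp (\<gamma> * x))
     \<and> (\<lambda>x. measure (\<mu> \<star> \<mu>) {x<..})
         \<sim>[at_top] (\<lambda>x. 2 * (\<integral>t. exp (\<gamma> * t) \<partial>\<mu>) * measure \<mu> {x<..})"

end

theory Submission
  imports Defs
begin

text \<open>Write \<open>G(x) = P(X > x)\<close> and \<open>F(x) = P(W > x)\<close>. Stationarity gives, for \<open>x \<ge> 0\<close>,
  \<open>F(x) = p P(W + X > x) + (1 - p) P(X - W > x)\<close>.

  First, \<open>F \<le> \<alpha> G\<close> for some \<alpha>: by a Kesten-type bound for \<open>S(\<gamma>)\<close> laws such a bound, once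
  \<open>\<alpha>\<close> is large, is preserved by one step of the recursion (here \<open>p \<phi>(\<gamma>) < 1\<close> is used), so it
  holds for all iterates started at \<open>0\<close>; these converge to the stationary law since the event
  \<open>{Y = -1, X \<le> 0}\<close>, of positive probability, resets the recursion to \<open>0\<close>.

  Next, splitting \<open>P(W + X > x)\<close> according to whether \<open>W\<close> or \<open>X\<close> exceeds a level \<open>A\<close> and using the
  \<open>S(\<gamma>)\<close> property, the liminf of \<open>F/G\<close> is at least, and its limsup at most,
  \<open>p r \<phi>(\<gamma>) + p E[e\<^sup>\<gamma>\<^sup>W] + (1 - p) E[e\<^sup>-\<^sup>\<gamma>\<^sup>W]\<close> with \<open>r\<close> the liminf, resp. limsup.
  Since \<open>p \<phi>(\<gamma>) < 1\<close> both equal \<open>(p E[e\<^sup>\<gamma>\<^sup>W] + (1 - p) E[e\<^sup>-\<^sup>\<gamma>\<^sup>W]) / (1 - p \<phi>(\<gamma>))\<close>.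

  Finally, \<open>E[e\<^sup>\<gamma>\<^sup>Z\<^sup>+] = E[e\<^sup>\<gamma>\<^sup>Z] + P(Z + E\<^sub>\<gamma> \<le> 0)\<close> turns the stationary equation into an
  identity for \<open>E[e\<^sup>\<gamma>\<^sup>W]\<close>, which rewrites this constant as \<open>C\<^sub>\<gamma>\<close>.\<close>

lemma measure_pair_measure_eq_integral_Pair:
  assumes "prob_space A" "prob_space B" and S: "S \<in> sets (A \<Otimes>\<^sub>M B)"
  shows "measure (A \<Otimes>\<^sub>M B) S = (\<integral>x. measure B (Pair x -` S) \<partial>A)"
    and "integrable A (\<lambda>x. measure B (Pair x -` S))"
proof -
  interpret A: prob_space A by fact
  interpret B: prob_space B by fact
  interpret pair_prob_space A B ..
  have int: "integrable (A \<Otimes>\<^sub>M B) (\<lambda>(x, y). indicator S (x, y) :: real)"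
    using integrable_indicator[OF S, of 1] S by (simp add: less_top[symmetric])
  have slice: "(\<integral>y. (indicator S (x, y) :: real) \<partial>B) = measure B (Pair x -` S)" for x
  proof -
    have "(\<lambda>y. indicator S (x, y) :: real) = indicator (Pair x -` S)"
      by (auto simp: indicator_def)
    moreover have "Pair x -` S \<inter> space B = Pair x -` S"
      using sets.sets_into_space[OF sets_Pair1[OF S, of x]] by auto
    ultimately show ?thesis by simp
  qed
  have "measure (A \<Otimes>\<^sub>M B) S = (\<integral>z. indicator S z \<partial>(A \<Otimes>\<^sub>M B))"
    using sets.sets_into_space[OF S] by (simp add: Int_absorb2)
  also have "\<dots> = (\<integral>x. \<integral>y. (indicator S (x, y) :: real) \<partial>B \<partial>A)"
    using integral_fst[of "\<lambda>x y. indicator S (x, y) :: real"] int by simp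
  finally show "measure (A \<Otimes>\<^sub>M B) S = (\<integral>x. measure B (Pair x -` S) \<partial>A)"
    unfolding slice .
  have "integrable A (\<lambda>x. \<integral>y. (indicator S (x, y) :: real) \<partial>B)"
    using integrable_fst[of "\<lambda>x y. indicator S (x, y) :: real"] int by simp
  then show "integrable A (\<lambda>x. measure B (Pair x -` S))" unfolding slice .
qed

lemma measure_pair_measure_eq_integral_Pair':
  assumes "prob_space A" "prob_space B" and S: "S \<in> sets (A \<Otimes>\<^sub>M B)"
  shows "measure (A \<Otimes>\<^sub>M B) S = (\<integral>y. measure A ((\<lambda>x. (x, y)) -` S) \<partial>B)"
    and "integrable B (\<lambda>y. measure A ((\<lambda>x. (x, y)) -` S))"
proof -
  interpret A: prob_space A by fact
  interpret B: prob_space B by fact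
  interpret pair_prob_space A B ..
  have int: "integrable (A \<Otimes>\<^sub>M B) (\<lambda>(x, y). indicator S (x, y) :: real)"
    using integrable_indicator[OF S, of 1] S by (simp add: less_top[symmetric])
  have slice: "(\<integral>x. (indicator S (x, y) :: real) \<partial>A) = measure A ((\<lambda>x. (x, y)) -` S)" for y
  proof -
    have "(\<lambda>x. indicator S (x, y) :: real) = indicator ((\<lambda>x. (x, y)) -` S)"
      by (auto simp: indicator_def)
    moreover have "(\<lambda>x. (x, y)) -` S \<inter> space A = (\<lambda>x. (x, y)) -` S"
      using sets.sets_into_space[OF sets_Pair2[OF S, of y]] by auto
    ultimately show ?thesis by simp
  qed
  have "measure (A \<Otimes>\<^sub>M B) S = (\<integral>z. indicator S z \<partial>(A \<Otimes>\<^sub>M B))"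
    using sets.sets_into_space[OF S] by (simp add: Int_absorb2)
  also have "\<dots> = (\<integral>y. \<integral>x. (indicator S (x, y) :: real) \<partial>A \<partial>B)"
    using integral_snd[OF int] by simp
  finally show "measure (A \<Otimes>\<^sub>M B) S = (\<integral>y. measure A ((\<lambda>x. (x, y)) -` S) \<partial>B)"
    unfolding slice .
  have "integrable B (\<lambda>y. \<integral>x. (indicator S (x, y) :: real) \<partial>A)"
    using integrable_snd[OF int] by simp
  then show "integrable B (\<lambda>y. measure A ((\<lambda>x. (x, y)) -` S))" unfolding slice .
qed

lemma measure_pair_measure_Times:
  assumes "prob_space A" "prob_space B" "S \<in> sets A" "T \<in> sets B"
  shows "measure (A \<Otimes>\<^sub>M B) (S \<times> T) = measure A S * measure B T"
proof -
  interpret B: prob_space B by fact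
  have "emeasure (A \<Otimes>\<^sub>M B) (S \<times> T) = emeasure A S * emeasure B T"
    using assms(3,4) by (rule B.emeasure_pair_measure_Times)
  then show ?thesis by (simp add: measure_def enn2real_mult)
qed

lemma Collect_in_sets_pair_borel:
  assumes "sets A = sets borel" "sets B = sets borel"
    and "Measurable.pred (borel \<Otimes>\<^sub>M borel) P"
  shows "{z::real \<times> real. P z} \<in> sets (A \<Otimes>\<^sub>M B)"
  using assms unfolding sets_pair_measure_cong[OF assms(1,2)] pred_def
  by (simp add: space_pair_measure)

lemma borel_measurable_measure_greaterThan:
  fixes \<rho> :: "real measure"
  assumes "finite_measure \<rho>" "sets \<rho> = sets borel"
  shows "(\<lambda>s. measure \<rho> {s<..}) \<in> borel_measurable borel"
proof -
  interpret finite_measure \<rho> by fact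
  have "mono (\<lambda>s. - measure \<rho> {s<..})"
    by (auto simp: mono_def assms(2) intro!: finite_measure_mono)
  from borel_measurable_uminus[OF borel_measurable_mono[OF this]] show ?thesis by simp
qed

lemma field_le_epsilon_mult:
  fixes x y c :: real
  assumes "\<And>e. 0 < e \<Longrightarrow> x \<le> y + e * c" "0 \<le> c"
  shows "x \<le> y"
proof (rule field_le_epsilon)
  fix e :: real assume "0 < e"
  then have "x \<le> y + e / (c + 1) * c" using assms by (intro assms(1)) simp
  also have "e / (c + 1) * c \<le> e"
    using \<open>0 < e\<close> \<open>0 \<le> c\<close> by (simp add: divide_le_eq field_simps)
  finally show "x \<le> y + e" by simp
qed

lemma obtain_gt_mult_less:
  fixes p c :: real
  assumes "p * c < 1"
  obtains \<theta> where "c < \<theta>" "p * \<theta> < 1"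
proof -
  have "((\<lambda>\<theta>. p * \<theta>) \<longlongrightarrow> p * c) (at_right c)"
    by (intro tendsto_intros)
  then have "eventually (\<lambda>\<theta>. c < \<theta> \<and> p * \<theta> < 1) (at_right c)"
    using assms by (intro eventually_conj eventually_at_right_less order_tendstoD(2)[of _ "p * c"]) simp_all
  then show ?thesis
    using eventually_happens'[OF trivial_limit_at_right_real] that by blast
qed

lemma tendsto_integral_indicator_atMost:
  fixes f :: "real \<Rightarrow> real"
  assumes sets: "sets \<rho> = sets borel" and f: "integrable \<rho> f"
  shows "((\<lambda>A. \<integral>w. indicator {..A} w * f w \<partial>\<rho>) \<longlongrightarrow> (\<integral>w. f w \<partial>\<rho>)) at_top"
proof (rule integral_dominated_convergence_at_top[where w="\<lambda>w. norm (f w)"])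
  have fm: "f \<in> borel_measurable \<rho>" using f by auto
  then show "f \<in> borel_measurable \<rho>" .
  have "indicator {..A} \<in> borel_measurable \<rho>" for A :: real
    using sets by (intro borel_measurable_indicator) simp
  with fm show "(\<lambda>w. indicator {..A} w * f w) \<in> borel_measurable \<rho>" for A
    by (intro borel_measurable_times) auto
  show "integrable \<rho> (\<lambda>w. norm (f w))" using f by simp
  show "AE w in \<rho>. ((\<lambda>A. indicator {..A} w * f w) \<longlongrightarrow> f w) at_top"
  proof (intro AE_I2)
    fix w
    have "eventually (\<lambda>A. indicator {..A} w * f w = f w) at_top"
      using eventually_ge_at_top[of w] by eventually_elim (simp add: indicator_def)
    then show "((\<lambda>A. indicator {..A} w * f w) \<longlongrightarrow> f w) at_top"
      by (rule tendsto_eventually)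
  qed
  show "\<forall>\<^sub>F A in at_top. AE w in \<rho>. norm (indicator {..A} w * f w) \<le> norm (f w)"
    by (intro always_eventually allI AE_I2) (simp add: indicator_def)
qed

lemma integrable_bounded_truncations:
  fixes f :: "real \<Rightarrow> real"
  assumes "sets \<rho> = sets borel" and f: "f \<in> borel_measurable borel" "\<And>w. 0 \<le> f w"
    and int: "\<And>A. integrable \<rho> (\<lambda>w. indicator {..A} w * f w)"
    and bound: "\<And>A. (\<integral>w. indicator {..A} w * f w \<partial>\<rho>) \<le> C"
  shows "integrable \<rho> f"
proof -
  define g where "g n w = indicator {..real n} w * f w" for n :: nat and w
  have "incseq (\<lambda>n. integral\<^sup>L \<rho> (g n))"
  proof (rule incseq_SucI)
    show "integral\<^sup>L \<rho> (g n) \<le> integral\<^sup>L \<rho> (g (Suc n))" for n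
      unfolding g_def using int f(2) by (intro integral_mono) (auto simp: indicator_def)
  qed
  moreover have "\<forall>n. integral\<^sup>L \<rho> (g n) \<le> C"
    using bound unfolding g_def by simp
  ultimately obtain L where L: "(\<lambda>n. integral\<^sup>L \<rho> (g n)) \<longlonglongrightarrow> L"
    using incseq_convergent by blast
  show ?thesis
  proof (rule integrable_monotone_convergence[OF _ _ _ L])
    show "integrable \<rho> (g n)" for n unfolding g_def by (rule int)
    show "AE w in \<rho>. mono (\<lambda>n. g n w)"
      using f(2) by (intro AE_I2) (auto simp: mono_def g_def indicator_def)
    show "AE w in \<rho>. (\<lambda>n. g n w) \<longlonglongrightarrow> f w"
    proof (intro AE_I2)
      fix w
      obtain N :: nat where "w \<le> real N" using real_arch_simple by blast
      then have "eventually (\<lambda>n. g n w = f w) sequentially"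
        unfolding eventually_sequentially
        by (intro exI[of _ N]) (auto simp: g_def indicator_def intro: order.trans)
      then show "(\<lambda>n. g n w) \<longlonglongrightarrow> f w" by (rule tendsto_eventually)
    qed
    show "f \<in> borel_measurable \<rho>"
      using f(1) measurable_cong_sets[OF assms(1) refl] by blast
  qed
qed

section \<open>Laws in \<open>S(\<gamma>)\<close>\<close>

locale class_S_law = prob_space \<mu> for \<mu> :: "real measure" +
  fixes \<gamma> :: real
  assumes sets_eq_borel[measurable_cong]: "sets \<mu> = sets borel"
    and gamma_pos: "\<gamma> > 0" and in_class_S: "class_S \<gamma> \<mu>"
begin

definition tail :: "real \<Rightarrow> real" where "tail x = measure \<mu> {x<..}"
definition mgf :: real where "mgf = (\<integral>t. exp (\<gamma> * t) \<partial>\<mu>)"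
definition mgf_upto :: "real \<Rightarrow> real" where
  "mgf_upto A = (\<integral>t. indicator {..A} t * exp (\<gamma> * t) \<partial>\<mu>)"

text \<open>For \<open>X\<^sub>1, X\<^sub>2\<close> independent with law \<open>\<mu>\<close>: \<open>conv_tail_small A x = P(X\<^sub>1 + X\<^sub>2 > x, X\<^sub>2 \<le> A)\<close>
  and \<open>conv_tail_large A x = P(X\<^sub>1 + X\<^sub>2 > x, X\<^sub>1 > A, X\<^sub>2 > A)\<close>.\<close>

definition conv_tail :: "real \<Rightarrow> real" where
  "conv_tail x = measure (\<mu> \<Otimes>\<^sub>M \<mu>) {(w, t). x < w + t}"
definition conv_tail_small :: "real \<Rightarrow> real \<Rightarrow> real" where
  "conv_tail_small A x = (\<integral>t. indicator {..A} t * tail (x - t) \<partial>\<mu>)"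
definition conv_tail_large :: "real \<Rightarrow> real \<Rightarrow> real" where
  "conv_tail_large A x = measure (\<mu> \<Otimes>\<^sub>M \<mu>) {(w, t). A < w \<and> A < t \<and> x < w + t}"

lemma space_eq[simp]: "space \<mu> = UNIV"
  using sets_eq_imp_space_eq[OF sets_eq_borel] by simp

lemma borel_measurable_eq: "borel_measurable \<mu> = borel_measurable borel"
  by (rule measurable_cong_sets[OF sets_eq_borel refl])

lemma tail_antimono: "a \<le> b \<Longrightarrow> tail b \<le> tail a"
  unfolding tail_def by (intro finite_measure_mono) auto

lemma tail_nonneg: "0 \<le> tail x" unfolding tail_def by simp
lemma tail_le_1: "tail x \<le> 1" unfolding tail_def by simp

lemma tail_ratio_tendsto: "((\<lambda>x. tail (x + y) / tail x) \<longlongrightarrow> exp (- \<gamma> * y)) at_top"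
  using in_class_S unfolding class_S_def tail_def by blast

lemma integrable_exp: "integrable \<mu> (\<lambda>x. exp (\<gamma> * x))"
  using in_class_S unfolding class_S_def by blast

lemma tail_pos: "0 < tail x"
proof (rule ccontr)
  assume "\<not> 0 < tail x"
  then have "tail x = 0" using tail_nonneg[of x] by simp
  have "eventually (\<lambda>y. tail (y + 0) / tail y = 0) at_top"
    using eventually_ge_at_top[of x]
  proof eventually_elim
    case (elim y)
    then show ?case using tail_antimono[of x y] tail_nonneg[of y] \<open>tail x = 0\<close> by simp
  qed
  then have "((\<lambda>y. tail (y + 0) / tail y) \<longlongrightarrow> 0) at_top"
    by (rule tendsto_eventually)
  with tail_ratio_tendsto[of 0] show False
    using tendsto_unique[OF trivial_limit_at_top_linorder] by fastforce
qed

lemma borel_measurable_tail[measurable]: "tail \<in> borel_measurable borel"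
  unfolding tail_def[abs_def] by (rule borel_measurable_measure_greaterThan[OF finite_measure_axioms sets_eq_borel])

lemma mgf_pos: "0 < mgf"
proof -
  have "mgf \<noteq> 0"
  proof
    assume "mgf = 0"
    then have "AE x in \<mu>. exp (\<gamma> * x) = 0"
      unfolding mgf_def using integral_nonneg_eq_0_iff_AE[OF integrable_exp] by simp
    then show False using AE_False by simp
  qed
  moreover have "0 \<le> mgf" unfolding mgf_def by simp
  ultimately show ?thesis by simp
qed

lemma eventually_shifted_tail_ratio_le:
  "eventually (\<lambda>x. \<forall>c\<le>K. tail (x - c) / tail x \<le> exp (\<gamma> * K) + 1) at_top"
proof -
  have "eventually (\<lambda>x. tail (x + - K) / tail x < exp (- \<gamma> * - K) + 1) at_top"
    using tail_ratio_tendsto[of "-K"] by (rule order_tendstoD) simp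
  then show ?thesis
  proof eventually_elim
    case (elim x)
    show ?case
    proof (intro allI impI)
      fix c assume "c \<le> K"
      then have "tail (x - c) / tail x \<le> tail (x + - K) / tail x"
        using tail_pos[of x] by (intro divide_right_mono tail_antimono) auto
      with elim show "tail (x - c) / tail x \<le> exp (\<gamma> * K) + 1" by simp
    qed
  qed
qed

lemma tendsto_integral_shifted_tail_ratio:
  fixes \<rho> :: "real measure" and f c :: "real \<Rightarrow> real"
  assumes "finite_measure \<rho>" "sets \<rho> = sets borel"
    and f: "f \<in> borel_measurable borel" "\<And>w. 0 \<le> f w" "\<And>w. f w \<le> 1"
    and c: "c \<in> borel_measurable borel" "\<And>w. c w \<le> K"
  shows "((\<lambda>x. (\<integral>w. f w * tail (x - c w) \<partial>\<rho>) / tail x) \<longlongrightarrow> (\<integral>w. f w * exp (\<gamma> * c w) \<partial>\<rho>)) at_top"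
proof -
  interpret R: finite_measure \<rho> by fact
  have mc: "borel_measurable \<rho> = borel_measurable borel"
    by (rule measurable_cong_sets[OF assms(2) refl])
  have "((\<lambda>x. \<integral>w. f w * (tail (x - c w) / tail x) \<partial>\<rho>) \<longlongrightarrow> (\<integral>w. f w * exp (\<gamma> * c w) \<partial>\<rho>)) at_top"
  proof (rule integral_dominated_convergence_at_top[where w="\<lambda>_. exp (\<gamma> * K) + 1"])
    show "(\<lambda>w. f w * exp (\<gamma> * c w)) \<in> borel_measurable \<rho>"
      unfolding mc using f c by measurable
    show "(\<lambda>w. f w * (tail (x - c w) / tail x)) \<in> borel_measurable \<rho>" for x
      unfolding mc using f c by measurable
    show "integrable \<rho> (\<lambda>_. exp (\<gamma> * K) + 1)" by simp
    show "AE w in \<rho>. ((\<lambda>x. f w * (tail (x - c w) / tail x)) \<longlongrightarrow> f w * exp (\<gamma> * c w)) at_top"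
      using tail_ratio_tendsto[of "- c w" for w] by (intro AE_I2 tendsto_mult tendsto_const) simp
    show "\<forall>\<^sub>F x in at_top. AE w in \<rho>. norm (f w * (tail (x - c w) / tail x)) \<le> exp (\<gamma> * K) + 1"
      using eventually_shifted_tail_ratio_le[of K]
    proof eventually_elim
      case (elim x)
      show ?case
      proof (intro AE_I2)
        fix w
        have "norm (f w * (tail (x - c w) / tail x)) = f w * (tail (x - c w) / tail x)"
          using f(2)[of w] tail_nonneg[of "x - c w"] tail_pos[of x] by (simp add: abs_mult)
        also have "\<dots> \<le> tail (x - c w) / tail x"
          using f(2,3)[of w] tail_nonneg[of "x - c w"] tail_pos[of x] by (intro mult_left_le_one_le) auto
        also have "\<dots> \<le> exp (\<gamma> * K) + 1"
          using elim c(2)[of w] by simp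
        finally show "norm (f w * (tail (x - c w) / tail x)) \<le> exp (\<gamma> * K) + 1" .
      qed
    qed
  qed
  then show ?thesis by (simp add: field_simps)
qed

lemma mgf_upto_nonneg: "0 \<le> mgf_upto A"
  unfolding mgf_upto_def by (simp add: indicator_def)

lemma tendsto_mgf_upto: "(mgf_upto \<longlongrightarrow> mgf) at_top"
  unfolding mgf_upto_def mgf_def
  by (rule tendsto_integral_indicator_atMost[OF sets_eq_borel integrable_exp])

lemma tendsto_conv_tail_small_ratio: "((\<lambda>x. conv_tail_small A x / tail x) \<longlongrightarrow> mgf_upto A) at_top"
proof -
  have conv: "conv_tail_small A x = (\<integral>t. indicator {..A} t * tail (x - min t A) \<partial>\<mu>)" for x
    unfolding conv_tail_small_def by (intro Bochner_Integration.integral_cong refl) (simp add: indicator_def)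
  have mgf: "mgf_upto A = (\<integral>t. indicator {..A} t * exp (\<gamma> * min t A) \<partial>\<mu>)"
    unfolding mgf_upto_def by (intro Bochner_Integration.integral_cong refl) (simp add: indicator_def)
  show ?thesis unfolding conv mgf
    by (rule tendsto_integral_shifted_tail_ratio[where K=A]) (auto simp: sets_eq_borel finite_measure_axioms indicator_def)
qed

lemma integrable_indicator_shifted:
  fixes g :: "real \<Rightarrow> real"
  assumes "g \<in> borel_measurable borel" "\<And>s. 0 \<le> g s" "\<And>s. g s \<le> 1"
  shows "integrable \<mu> (\<lambda>t. indicator {..A} t * g (x - t))"
  by (rule integrable_const_bound[where B=1]) (use assms in \<open>auto simp: borel_measurable_eq indicator_def\<close>)

lemma measure_sum_gt_eq_integral_tail:
  fixes \<rho> :: "real measure"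
  assumes "prob_space \<rho>" "sets \<rho> = sets borel"
  shows "measure (\<rho> \<Otimes>\<^sub>M \<mu>) {(w, t). x < w + t} = (\<integral>w. tail (x - w) \<partial>\<rho>)"
proof -
  have "{(w, t). x < w + t} \<in> sets (\<rho> \<Otimes>\<^sub>M \<mu>)"
    unfolding case_prod_unfold using assms(2) sets_eq_borel
    by (rule Collect_in_sets_pair_borel) measurable
  moreover have "Pair w -` {(w, t). x < w + t} = {x - w<..}" for w
    by auto
  ultimately show ?thesis
    by (simp add: measure_pair_measure_eq_integral_Pair(1)[OF assms(1) prob_space_axioms] tail_def)
qed

lemma measure_sum_gt_snd_small:
  fixes \<rho> :: "real measure"
  assumes "prob_space \<rho>" "sets \<rho> = sets borel"
  shows "measure (\<rho> \<Otimes>\<^sub>M \<mu>) {(w, t). t \<le> A \<and> x < w + t}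
    = (\<integral>t. indicator {..A} t * measure \<rho> {x - t<..} \<partial>\<mu>)"
proof -
  have "{(w, t). t \<le> A \<and> x < w + t} \<in> sets (\<rho> \<Otimes>\<^sub>M \<mu>)"
    unfolding case_prod_unfold using assms(2) sets_eq_borel
    by (rule Collect_in_sets_pair_borel) measurable
  moreover have "(\<lambda>w. (w, t)) -` {(w, t). t \<le> A \<and> x < w + t} = (if t \<le> A then {x - t<..} else {})" for t
    by auto
  ultimately show ?thesis
    by (auto simp: measure_pair_measure_eq_integral_Pair'(1)[OF assms(1) prob_space_axioms] indicator_def
        intro!: Bochner_Integration.integral_cong)
qed

lemma measure_sum_gt_fst_small:
  fixes \<rho> :: "real measure"
  assumes "prob_space \<rho>" "sets \<rho> = sets borel" and "2 * A \<le> x"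
  shows "measure (\<rho> \<Otimes>\<^sub>M \<mu>) {(w, t). A < t \<and> w \<le> A \<and> x < w + t}
    = (\<integral>w. indicator {..A} w * tail (x - w) \<partial>\<rho>)"
proof -
  have "{(w, t). A < t \<and> w \<le> A \<and> x < w + t} \<in> sets (\<rho> \<Otimes>\<^sub>M \<mu>)"
    unfolding case_prod_unfold using assms(2) sets_eq_borel
    by (rule Collect_in_sets_pair_borel) measurable
  moreover have "Pair w -` {(w, t). A < t \<and> w \<le> A \<and> x < w + t} = (if w \<le> A then {x - w<..} else {})" for w
    using \<open>2 * A \<le> x\<close> by auto
  ultimately show ?thesis
    by (auto simp: measure_pair_measure_eq_integral_Pair(1)[OF assms(1) prob_space_axioms] indicator_def tail_def
        intro!: Bochner_Integration.integral_cong)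
qed

lemma measure_sum_gt_split:
  fixes \<rho> :: "real measure"
  assumes "prob_space \<rho>" "sets \<rho> = sets borel" and "2 * A \<le> x"
  shows "measure (\<rho> \<Otimes>\<^sub>M \<mu>) {(w, t). x < w + t} =
      (\<integral>t. indicator {..A} t * measure \<rho> {x - t<..} \<partial>\<mu>)
    + (\<integral>w. indicator {..A} w * tail (x - w) \<partial>\<rho>)
    + measure (\<rho> \<Otimes>\<^sub>M \<mu>) {(w, t). A < w \<and> A < t \<and> x < w + t}"
proof -
  interpret P: prob_space "\<rho> \<Otimes>\<^sub>M \<mu>" by (rule prob_space_pair[OF assms(1) prob_space_axioms])
  define S1 where "S1 = {(w::real, t). t \<le> A \<and> x < w + t}"
  define S2 where "S2 = {(w::real, t). A < t \<and> w \<le> A \<and> x < w + t}"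
  define S3 where "S3 = {(w::real, t). A < w \<and> A < t \<and> x < w + t}"
  have sets: "S1 \<in> P.events" "S2 \<in> P.events" "S3 \<in> P.events"
    unfolding S1_def S2_def S3_def case_prod_unfold using assms(2) sets_eq_borel
    by (intro Collect_in_sets_pair_borel; measurable)+
  have "{(w, t). x < w + t} = S1 \<union> (S2 \<union> S3)"
    unfolding S1_def S2_def S3_def by auto
  moreover have "S2 \<inter> S3 = {}" "S1 \<inter> (S2 \<union> S3) = {}"
    unfolding S1_def S2_def S3_def by auto
  ultimately have "measure (\<rho> \<Otimes>\<^sub>M \<mu>) {(w, t). x < w + t} =
      measure (\<rho> \<Otimes>\<^sub>M \<mu>) S1 + measure (\<rho> \<Otimes>\<^sub>M \<mu>) S2 + measure (\<rho> \<Otimes>\<^sub>M \<mu>) S3"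
    using sets by (simp add: P.finite_measure_Union)
  then show ?thesis
    unfolding S1_def S2_def S3_def
    by (simp add: measure_sum_gt_snd_small[OF assms(1,2)] measure_sum_gt_fst_small[OF assms])
qed

lemma measure_convolution_greaterThan: "measure (\<mu> \<star> \<mu>) {x<..} = conv_tail x"
proof -
  have mf: "(\<lambda>(a::real, b). a + b) \<in> measurable (\<mu> \<Otimes>\<^sub>M \<mu>) borel"
    using measurable_cong_sets[OF sets_pair_measure_cong[OF sets_eq_borel sets_eq_borel] refl, of borel]
    by simp
  have "measure (\<mu> \<star> \<mu>) {x<..} = measure (\<mu> \<Otimes>\<^sub>M \<mu>) ((\<lambda>(a, b). a + b) -` {x<..} \<inter> space (\<mu> \<Otimes>\<^sub>M \<mu>))"
    unfolding convolution_def by (rule measure_distr[OF mf]) simp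
  also have "(\<lambda>(a::real, b). a + b) -` {x<..} \<inter> space (\<mu> \<Otimes>\<^sub>M \<mu>) = {(w, t). x < w + t}"
    by (auto simp: space_pair_measure)
  finally show ?thesis unfolding conv_tail_def .
qed

lemma tendsto_conv_tail_ratio: "((\<lambda>x. conv_tail x / tail x) \<longlongrightarrow> 2 * mgf) at_top"
proof -
  have "conv_tail \<sim>[at_top] (\<lambda>x. 2 * mgf * tail x)"
    using in_class_S unfolding class_S_def measure_convolution_greaterThan tail_def mgf_def by blast
  then have "((\<lambda>x. conv_tail x / (2 * mgf * tail x)) \<longlongrightarrow> 1) at_top"
  proof (rule asymp_equivD_strong)
    have "2 * mgf * tail x \<noteq> 0" for x using mgf_pos tail_pos[of x] by simp
    then show "\<forall>\<^sub>F x in at_top. conv_tail x \<noteq> 0 \<or> 2 * mgf * tail x \<noteq> 0"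
      by (intro always_eventually) simp
  qed
  then have "((\<lambda>x. (2 * mgf) * (conv_tail x / (2 * mgf * tail x))) \<longlongrightarrow> (2 * mgf) * 1) at_top"
    by (intro tendsto_mult tendsto_const)
  then show ?thesis using mgf_pos by simp
qed

lemma conv_tail_split: "2 * A \<le> x \<Longrightarrow> conv_tail x = 2 * conv_tail_small A x + conv_tail_large A x"
  using measure_sum_gt_split[OF prob_space_axioms sets_eq_borel, of A x]
  unfolding conv_tail_def conv_tail_large_def conv_tail_small_def tail_def by simp

lemma tendsto_conv_tail_large_ratio:
  "((\<lambda>x. conv_tail_large A x / tail x) \<longlongrightarrow> 2 * mgf - 2 * mgf_upto A) at_top"
proof -
  have "((\<lambda>x. conv_tail x / tail x - 2 * (conv_tail_small A x / tail x)) \<longlongrightarrow> 2 * mgf - 2 * mgf_upto A) at_top"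
    by (intro tendsto_diff tendsto_mult tendsto_const tendsto_conv_tail_ratio tendsto_conv_tail_small_ratio)
  moreover have "eventually (\<lambda>x. conv_tail x / tail x - 2 * (conv_tail_small A x / tail x) = conv_tail_large A x / tail x) at_top"
    using eventually_ge_at_top[of "2 * A"]
    by eventually_elim (simp add: conv_tail_split diff_divide_distrib add_divide_distrib)
  ultimately show ?thesis by (rule Lim_transform_eventually)
qed

lemma integral_small_shifted_tail_le:
  fixes \<rho> :: "real measure"
  assumes "prob_space \<rho>" "sets \<rho> = sets borel" and b: "\<And>s. measure \<rho> {s<..} \<le> \<alpha> * tail s"
  shows "(\<integral>t. indicator {..A} t * measure \<rho> {x - t<..} \<partial>\<mu>) \<le> \<alpha> * conv_tail_small A x"
proof -
  interpret R: prob_space \<rho> by fact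
  have m: "(\<lambda>t. measure \<rho> {x - t<..}) \<in> borel_measurable borel"
    using borel_measurable_measure_greaterThan[OF R.finite_measure_axioms assms(2)] by measurable
  have "(\<integral>t. indicator {..A} t * measure \<rho> {x - t<..} \<partial>\<mu>) \<le> (\<integral>t. \<alpha> * (indicator {..A} t * tail (x - t)) \<partial>\<mu>)"
  proof (rule integral_mono)
    show "integrable \<mu> (\<lambda>t. indicator {..A} t * measure \<rho> {x - t<..})"
      by (rule integrable_const_bound[where B=1]) (use m in \<open>auto simp: borel_measurable_eq indicator_def\<close>)
    show "integrable \<mu> (\<lambda>t. \<alpha> * (indicator {..A} t * tail (x - t)))"
      by (rule integrable_const_bound[where B="\<bar>\<alpha>\<bar>"])
         (auto simp: borel_measurable_eq indicator_def abs_mult tail_nonneg tail_le_1 intro!: mult_left_le)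
    show "indicator {..A} t * measure \<rho> {x - t<..} \<le> \<alpha> * (indicator {..A} t * tail (x - t))" for t
      using b[of "x - t"] by (simp add: indicator_def)
  qed
  also have "\<dots> = \<alpha> * conv_tail_small A x" unfolding conv_tail_small_def by simp
  finally show ?thesis .
qed

lemma measure_sum_large_le:
  fixes \<rho> :: "real measure"
  assumes "prob_space \<rho>" "sets \<rho> = sets borel" and b: "\<And>s. measure \<rho> {s<..} \<le> \<alpha> * tail s"
  shows "measure (\<rho> \<Otimes>\<^sub>M \<mu>) {(w, t). A < w \<and> A < t \<and> x < w + t} \<le> \<alpha> * conv_tail_large A x"
proof -
  define S where "S = {(w::real, t::real). A < w \<and> A < t \<and> x < w + t}"
  have mS: "S \<in> sets (\<rho> \<Otimes>\<^sub>M \<mu>)" "S \<in> sets (\<mu> \<Otimes>\<^sub>M \<mu>)"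
    unfolding S_def case_prod_unfold using assms(2) sets_eq_borel
    by (intro Collect_in_sets_pair_borel; measurable)+
  note slices = measure_pair_measure_eq_integral_Pair'[OF assms(1) prob_space_axioms mS(1)]
    measure_pair_measure_eq_integral_Pair'[OF prob_space_axioms prob_space_axioms mS(2)]
  have "(\<lambda>w. (w, t)) -` S = (if A < t then {max A (x - t)<..} else {})" for t
    unfolding S_def by auto
  then have pointwise: "measure \<rho> ((\<lambda>w. (w, t)) -` S) \<le> \<alpha> * measure \<mu> ((\<lambda>w. (w, t)) -` S)" for t
    using b[of "max A (x - t)"] by (simp add: tail_def)
  have "measure (\<rho> \<Otimes>\<^sub>M \<mu>) S \<le> (\<integral>t. \<alpha> * measure \<mu> ((\<lambda>w. (w, t)) -` S) \<partial>\<mu>)"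
    unfolding slices(1) by (intro integral_mono slices(2) integrable_mult_right slices(4) pointwise)
  also have "\<dots> = \<alpha> * measure (\<mu> \<Otimes>\<^sub>M \<mu>) S"
    using slices(3) by simp
  finally show ?thesis unfolding S_def conv_tail_large_def .
qed

lemma integral_small_tail_le:
  fixes \<rho> :: "real measure"
  assumes "prob_space \<rho>" "sets \<rho> = sets borel"
  shows "(\<integral>w. indicator {..A} w * tail (x - w) \<partial>\<rho>) \<le> tail (x - A)"
proof -
  interpret R: prob_space \<rho> by fact
  have mc: "borel_measurable \<rho> = borel_measurable borel"
    by (rule measurable_cong_sets[OF assms(2) refl])
  have "(\<integral>w. indicator {..A} w * tail (x - w) \<partial>\<rho>) \<le> (\<integral>w. tail (x - A) \<partial>\<rho>)"
  proof (rule integral_mono)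
    show "integrable \<rho> (\<lambda>w. indicator {..A} w * tail (x - w))"
      by (rule R.integrable_const_bound[where B=1]) (auto simp: mc indicator_def tail_nonneg tail_le_1)
    show "indicator {..A} w * tail (x - w) \<le> tail (x - A)" for w
      using tail_antimono[of "x - A" "x - w"] tail_nonneg by (auto simp: indicator_def)
  qed simp
  then show ?thesis by (simp add: R.prob_space)
qed

lemma measure_sum_gt_le:
  fixes \<rho> :: "real measure"
  assumes "prob_space \<rho>" "sets \<rho> = sets borel" and b: "\<And>s. measure \<rho> {s<..} \<le> \<alpha> * tail s"
    and "2 * A \<le> x"
  shows "measure (\<rho> \<Otimes>\<^sub>M \<mu>) {(w, t). x < w + t} \<le> \<alpha> * (conv_tail x - conv_tail_small A x) + tail (x - A)"
proof -
  have "measure (\<rho> \<Otimes>\<^sub>M \<mu>) {(w, t). x < w + t}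
      \<le> \<alpha> * conv_tail_small A x + tail (x - A) + \<alpha> * conv_tail_large A x"
    unfolding measure_sum_gt_split[OF assms(1,2,4)]
    using integral_small_shifted_tail_le[OF assms(1-3), of A x] integral_small_tail_le[OF assms(1,2), of A x]
      measure_sum_large_le[OF assms(1-3), of A x]
    by linarith
  also have "\<dots> = \<alpha> * (conv_tail x - conv_tail_small A x) + tail (x - A)"
    unfolding conv_tail_split[OF assms(4)] by (simp add: algebra_simps)
  finally show ?thesis .
qed

text \<open>Kesten-type bound: the factor \<open>\<theta>\<close> only has to exceed \<open>mgf\<close>, because for large \<open>x\<close> the part of
  \<open>P(W + X > x)\<close> where \<open>X \<le> A\<close> is at most \<open>\<alpha> conv_tail_small A x\<close> and the part where \<open>W \<le> A\<close> is
  \<open>O(G(x))\<close> uniformly in \<open>\<alpha>\<close>.\<close>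

lemma kesten_bound:
  assumes "p * mgf < 1"
  obtains \<theta> K x0 where "0 \<le> \<theta>" "p * \<theta> < 1" "0 \<le> K" "0 \<le> x0"
    "\<And>\<rho> \<alpha> x. prob_space \<rho> \<Longrightarrow> sets \<rho> = sets borel \<Longrightarrow> 0 \<le> \<alpha> \<Longrightarrow>
       (\<And>s. measure \<rho> {s<..} \<le> \<alpha> * tail s) \<Longrightarrow> x0 \<le> x \<Longrightarrow>
       measure (\<rho> \<Otimes>\<^sub>M \<mu>) {(w, t). x < w + t} \<le> (\<theta> * \<alpha> + K) * tail x"
proof -
  obtain \<theta> where \<theta>: "mgf < \<theta>" "p * \<theta> < 1"
    using obtain_gt_mult_less[OF assms] .
  have "eventually (\<lambda>A. 2 * mgf - \<theta> < mgf_upto A) at_top"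
    using tendsto_mgf_upto by (rule order_tendstoD) (use \<theta> in simp)
  then obtain A where A: "2 * mgf - \<theta> < mgf_upto A"
    using eventually_happens'[OF trivial_limit_at_top_linorder] by blast
  define K where "K = exp (\<gamma> * A) + 1"
  have ev1: "eventually (\<lambda>x. conv_tail x / tail x - conv_tail_small A x / tail x < \<theta>) at_top"
    by (rule order_tendstoD(2)[OF tendsto_diff[OF tendsto_conv_tail_ratio tendsto_conv_tail_small_ratio]])
      (use A in simp)
  have ev2: "eventually (\<lambda>x. tail (x + - A) / tail x < K) at_top"
    using tail_ratio_tendsto[of "-A"] by (rule order_tendstoD) (simp add: K_def)
  obtain x0 where "\<And>x. x0 \<le> x \<Longrightarrow>
      conv_tail x / tail x - conv_tail_small A x / tail x < \<theta> \<and> tail (x + - A) / tail x < K"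
    using eventually_conj[OF ev1 ev2] by (auto simp: eventually_at_top_linorder)
  then have x0: "conv_tail x - conv_tail_small A x < \<theta> * tail x \<and> tail (x - A) < K * tail x"
    if "x0 \<le> x" for x
    using that tail_pos[of x] by (simp add: diff_divide_distrib[symmetric] divide_less_eq)
  show ?thesis
  proof (rule that[of \<theta> K "max x0 (max 0 (2 * A))"])
    show "0 \<le> \<theta>" using \<theta>(1) mgf_pos by simp
    show "0 \<le> K" unfolding K_def by (simp add: add_nonneg_nonneg)
    fix \<rho> \<alpha> x assume \<rho>: "prob_space \<rho>" "sets \<rho> = sets borel" "0 \<le> \<alpha>"
      and b: "\<And>s. measure \<rho> {s<..} \<le> \<alpha> * tail s" and x: "max x0 (max 0 (2 * A)) \<le> x"
    have "measure (\<rho> \<Otimes>\<^sub>M \<mu>) {(w, t). x < w + t} \<le> \<alpha> * (conv_tail x - conv_tail_small A x) + tail (x - A)"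
      using x by (intro measure_sum_gt_le[OF \<rho>(1,2) b]) simp
    also have "\<dots> \<le> \<alpha> * (\<theta> * tail x) + K * tail x"
      using x0[of x] x \<rho>(3) by (intro add_mono mult_left_mono) auto
    finally show "measure (\<rho> \<Otimes>\<^sub>M \<mu>) {(w, t). x < w + t} \<le> (\<theta> * \<alpha> + K) * tail x"
      by (simp add: algebra_simps)
  qed (use \<theta> in auto)
qed

end

section \<open>The tail equation\<close>

locale tail_equation = class_S_law \<mu> \<gamma> for \<mu> \<gamma> +
  fixes \<rho> :: "real measure" and p \<alpha> :: real
  assumes prob_space_rho: "prob_space \<rho>" and sets_rho[measurable_cong]: "sets \<rho> = sets borel"
    and AE_rho_nonneg: "AE w in \<rho>. 0 \<le> w"
    and p_nonneg: "0 \<le> p" and p_less_1: "p < 1" and p_mgf_less_1: "p * mgf < 1"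
    and tail_rho_bound: "\<And>s. measure \<rho> {s<..} \<le> \<alpha> * tail s"
    and tail_rho_eq: "\<And>x. 0 \<le> x \<Longrightarrow> measure \<rho> {x<..} =
      p * measure (\<rho> \<Otimes>\<^sub>M \<mu>) {(w, t). x < w + t} + (1 - p) * (\<integral>w. tail (x + w) \<partial>\<rho>)"
begin

sublocale rho: prob_space \<rho> by (rule prob_space_rho)

definition tail_rho :: "real \<Rightarrow> real" where "tail_rho x = measure \<rho> {x<..}"
definition ratio :: "real \<Rightarrow> real" where "ratio x = tail_rho x / tail x"
definition mgf_rho :: real where "mgf_rho = (\<integral>w. exp (\<gamma> * w) \<partial>\<rho>)"
definition mgf_rho_upto :: "real \<Rightarrow> real" where
  "mgf_rho_upto A = (\<integral>w. indicator {..A} w * exp (\<gamma> * w) \<partial>\<rho>)"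
definition laplace_rho :: real where "laplace_rho = (\<integral>w. exp (- \<gamma> * w) \<partial>\<rho>)"
definition tail_constant :: real where
  "tail_constant = (p * mgf_rho + (1 - p) * laplace_rho) / (1 - p * mgf)"

text \<open>With \<open>W \<sim> \<rho>\<close> and \<open>X \<sim> \<mu>\<close> independent: \<open>sum_tail_X_small A x = P(W + X > x, X \<le> A)\<close>,
  \<open>sum_tail_W_small A x = P(W + X > x, W \<le> A)\<close>, \<open>sum_tail_both_large A x = P(W + X > x, W > A, X > A)\<close>
  and \<open>diff_tail x = P(X - W > x)\<close>.\<close>

definition sum_tail_X_small :: "real \<Rightarrow> real \<Rightarrow> real" where
  "sum_tail_X_small A x = (\<integral>t. indicator {..A} t * tail_rho (x - t) \<partial>\<mu>)"
definition sum_tail_W_small :: "real \<Rightarrow> real \<Rightarrow> real" where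
  "sum_tail_W_small A x = (\<integral>w. indicator {..A} w * tail (x - w) \<partial>\<rho>)"
definition sum_tail_both_large :: "real \<Rightarrow> real \<Rightarrow> real" where
  "sum_tail_both_large A x = measure (\<rho> \<Otimes>\<^sub>M \<mu>) {(w, t). A < w \<and> A < t \<and> x < w + t}"
definition diff_tail :: "real \<Rightarrow> real" where "diff_tail x = (\<integral>w. tail (x + w) \<partial>\<rho>)"

lemma space_rho_eq[simp]: "space \<rho> = UNIV"
  using sets_eq_imp_space_eq[OF sets_rho] by simp

lemma borel_measurable_rho_eq: "borel_measurable \<rho> = borel_measurable borel"
  by (rule measurable_cong_sets[OF sets_rho refl])

lemma tail_rho_nonneg: "0 \<le> tail_rho x" unfolding tail_rho_def by simp
lemma tail_rho_le_1: "tail_rho x \<le> 1" unfolding tail_rho_def by simp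

lemma ratio_nonneg: "0 \<le> ratio x"
  unfolding ratio_def using tail_rho_nonneg tail_pos[of x] by simp

lemma ratio_le: "ratio x \<le> \<alpha>"
  unfolding ratio_def using tail_rho_bound[of x] tail_pos[of x] by (simp add: tail_rho_def divide_le_eq)

lemma borel_measurable_tail_rho[measurable]: "tail_rho \<in> borel_measurable borel"
  unfolding tail_rho_def[abs_def] by (rule borel_measurable_measure_greaterThan[OF rho.finite_measure_axioms sets_rho])

lemma laplace_rho_nonneg: "0 \<le> laplace_rho" unfolding laplace_rho_def by simp

lemma tail_rho_split:
  assumes "0 \<le> x" "2 * A \<le> x"
  shows "tail_rho x = p * (sum_tail_X_small A x + sum_tail_W_small A x + sum_tail_both_large A x)
    + (1 - p) * diff_tail x"
  using tail_rho_eq[OF assms(1)] measure_sum_gt_split[OF prob_space_rho sets_rho assms(2)]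
  unfolding tail_rho_def sum_tail_X_small_def sum_tail_W_small_def sum_tail_both_large_def diff_tail_def
  by simp

lemma sum_tail_both_large_nonneg: "0 \<le> sum_tail_both_large A x"
  unfolding sum_tail_both_large_def by simp

lemma sum_tail_both_large_le: "sum_tail_both_large A x \<le> \<alpha> * conv_tail_large A x"
  unfolding sum_tail_both_large_def using measure_sum_large_le[OF prob_space_rho sets_rho tail_rho_bound] .

lemma sum_tail_X_small_le:
  assumes "\<And>s. s0 \<le> s \<Longrightarrow> tail_rho s \<le> U * tail s" and "s0 + A \<le> x"
  shows "sum_tail_X_small A x \<le> U * conv_tail_small A x"
proof -
  have "sum_tail_X_small A x \<le> (\<integral>t. U * (indicator {..A} t * tail (x - t)) \<partial>\<mu>)"
    unfolding sum_tail_X_small_def using assms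
    by (intro integral_mono integrable_mult_right integrable_indicator_shifted)
      (auto simp: tail_rho_nonneg tail_rho_le_1 tail_nonneg tail_le_1 indicator_def)
  then show ?thesis unfolding conv_tail_small_def by simp
qed

lemma sum_tail_X_small_ge:
  assumes "\<And>s. s0 \<le> s \<Longrightarrow> U * tail s \<le> tail_rho s" and "s0 + A \<le> x"
  shows "U * conv_tail_small A x \<le> sum_tail_X_small A x"
proof -
  have "(\<integral>t. U * (indicator {..A} t * tail (x - t)) \<partial>\<mu>) \<le> sum_tail_X_small A x"
    unfolding sum_tail_X_small_def using assms
    by (intro integral_mono integrable_mult_right integrable_indicator_shifted)
      (auto simp: tail_rho_nonneg tail_rho_le_1 tail_nonneg tail_le_1 indicator_def)
  then show ?thesis unfolding conv_tail_small_def by simp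
qed

lemma tendsto_sum_tail_W_small_ratio: "((\<lambda>x. sum_tail_W_small A x / tail x) \<longlongrightarrow> mgf_rho_upto A) at_top"
proof -
  have W: "sum_tail_W_small A x = (\<integral>w. indicator {..A} w * tail (x - min w A) \<partial>\<rho>)" for x
    unfolding sum_tail_W_small_def by (intro Bochner_Integration.integral_cong refl) (simp add: indicator_def)
  have mgf: "mgf_rho_upto A = (\<integral>w. indicator {..A} w * exp (\<gamma> * min w A) \<partial>\<rho>)"
    unfolding mgf_rho_upto_def by (intro Bochner_Integration.integral_cong refl) (simp add: indicator_def)
  show ?thesis unfolding W mgf
    by (rule tendsto_integral_shifted_tail_ratio[where K=A]) (auto simp: sets_rho rho.finite_measure_axioms indicator_def)
qed

lemma tendsto_diff_tail_ratio: "((\<lambda>x. diff_tail x / tail x) \<longlongrightarrow> laplace_rho) at_top"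
proof -
  have diff: "diff_tail x = (\<integral>w. 1 * tail (x - (- max 0 w)) \<partial>\<rho>)" for x
    unfolding diff_tail_def
  proof (rule integral_cong_AE)
    show "AE w in \<rho>. tail (x + w) = 1 * tail (x - - max 0 w)"
      using AE_rho_nonneg by eventually_elim simp
  qed (simp_all add: borel_measurable_rho_eq)
  have laplace: "laplace_rho = (\<integral>w. 1 * exp (\<gamma> * (- max 0 w)) \<partial>\<rho>)"
    unfolding laplace_rho_def
  proof (rule integral_cong_AE)
    show "AE w in \<rho>. exp (- \<gamma> * w) = 1 * exp (\<gamma> * (- max 0 w))"
      using AE_rho_nonneg by eventually_elim simp
  qed (simp_all add: borel_measurable_rho_eq)
  show ?thesis unfolding diff laplace
    by (rule tendsto_integral_shifted_tail_ratio[where K=0]) (auto simp: sets_rho rho.finite_measure_axioms)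
qed

lemma tail_rho_upper:
  assumes "\<And>s. s0 \<le> s \<Longrightarrow> tail_rho s \<le> U * tail s" and x: "max (s0 + A) (max 0 (2 * A)) \<le> x"
  shows "tail_rho x \<le> p * (U * conv_tail_small A x + sum_tail_W_small A x + \<alpha> * conv_tail_large A x)
    + (1 - p) * diff_tail x"
proof -
  have "sum_tail_X_small A x + sum_tail_W_small A x + sum_tail_both_large A x
      \<le> U * conv_tail_small A x + sum_tail_W_small A x + \<alpha> * conv_tail_large A x"
    using sum_tail_X_small_le[of s0 U A x, OF assms(1)] sum_tail_both_large_le[of A x] x by simp
  then have "p * (sum_tail_X_small A x + sum_tail_W_small A x + sum_tail_both_large A x)
      \<le> p * (U * conv_tail_small A x + sum_tail_W_small A x + \<alpha> * conv_tail_large A x)"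
    using p_nonneg by (rule mult_left_mono)
  moreover have "tail_rho x = p * (sum_tail_X_small A x + sum_tail_W_small A x + sum_tail_both_large A x)
      + (1 - p) * diff_tail x"
    using x by (intro tail_rho_split) auto
  ultimately show ?thesis by linarith
qed

lemma tail_rho_lower:
  assumes "\<And>s. s0 \<le> s \<Longrightarrow> U * tail s \<le> tail_rho s" and x: "max (s0 + A) (max 0 (2 * A)) \<le> x"
  shows "p * (U * conv_tail_small A x + sum_tail_W_small A x) + (1 - p) * diff_tail x \<le> tail_rho x"
proof -
  have "U * conv_tail_small A x + sum_tail_W_small A x
      \<le> sum_tail_X_small A x + sum_tail_W_small A x + sum_tail_both_large A x"
    using sum_tail_X_small_ge[of s0 U A x, OF assms(1)] sum_tail_both_large_nonneg[of A x] x by simp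
  then have "p * (U * conv_tail_small A x + sum_tail_W_small A x)
      \<le> p * (sum_tail_X_small A x + sum_tail_W_small A x + sum_tail_both_large A x)"
    using p_nonneg by (rule mult_left_mono)
  moreover have "tail_rho x = p * (sum_tail_X_small A x + sum_tail_W_small A x + sum_tail_both_large A x)
      + (1 - p) * diff_tail x"
    using x by (intro tail_rho_split) auto
  ultimately show ?thesis by linarith
qed

lemma Limsup_ratio_le:
  assumes "eventually (\<lambda>x. ratio x \<le> U) at_top"
  shows "Limsup at_top (\<lambda>x. ereal (ratio x))
    \<le> ereal (p * U * mgf_upto A + p * mgf_rho_upto A + p * \<alpha> * (2 * mgf - 2 * mgf_upto A) + (1 - p) * laplace_rho)"
proof -
  obtain s0 where "\<And>s. s0 \<le> s \<Longrightarrow> ratio s \<le> U"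
    using assms by (auto simp: eventually_at_top_linorder)
  then have tail_le: "\<And>s. s0 \<le> s \<Longrightarrow> tail_rho s \<le> U * tail s"
    using tail_pos by (simp add: ratio_def divide_le_eq)
  define \<psi> where "\<psi> x = p * U * (conv_tail_small A x / tail x) + p * (sum_tail_W_small A x / tail x)
    + p * \<alpha> * (conv_tail_large A x / tail x) + (1 - p) * (diff_tail x / tail x)" for x
  have "eventually (\<lambda>x. ratio x \<le> \<psi> x) at_top"
    using eventually_ge_at_top[of "max (s0 + A) (max 0 (2 * A))"]
  proof eventually_elim
    case (elim x)
    have "tail_rho x \<le> p * (U * conv_tail_small A x + sum_tail_W_small A x + \<alpha> * conv_tail_large A x)
        + (1 - p) * diff_tail x"
      using tail_rho_upper[OF tail_le elim] by simp
    then have "ratio x \<le> (p * (U * conv_tail_small A x + sum_tail_W_small A x + \<alpha> * conv_tail_large A x)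
        + (1 - p) * diff_tail x) / tail x"
      unfolding ratio_def using tail_pos[of x] by (intro divide_right_mono) simp_all
    also have "\<dots> = \<psi> x" unfolding \<psi>_def using tail_pos[of x] by (simp add: field_simps)
    finally show ?case .
  qed
  then have "Limsup at_top (\<lambda>x. ereal (ratio x)) \<le> Limsup at_top (\<lambda>x. ereal (\<psi> x))"
    by (intro Limsup_mono) simp
  also have "(\<psi> \<longlongrightarrow> p * U * mgf_upto A + p * mgf_rho_upto A + p * \<alpha> * (2 * mgf - 2 * mgf_upto A)
      + (1 - p) * laplace_rho) at_top"
    unfolding \<psi>_def
    by (intro tendsto_intros tendsto_conv_tail_small_ratio tendsto_sum_tail_W_small_ratio
        tendsto_conv_tail_large_ratio tendsto_diff_tail_ratio)
  then have "Limsup at_top (\<lambda>x. ereal (\<psi> x)) = ereal (p * U * mgf_upto A + p * mgf_rho_upto A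
      + p * \<alpha> * (2 * mgf - 2 * mgf_upto A) + (1 - p) * laplace_rho)"
    by (intro lim_imp_Limsup) (simp_all add: lim_ereal)
  finally show ?thesis .
qed

lemma Liminf_ratio_ge:
  assumes "eventually (\<lambda>x. U \<le> ratio x) at_top"
  shows "ereal (p * U * mgf_upto A + p * mgf_rho_upto A + (1 - p) * laplace_rho)
    \<le> Liminf at_top (\<lambda>x. ereal (ratio x))"
proof -
  obtain s0 where "\<And>s. s0 \<le> s \<Longrightarrow> U \<le> ratio s"
    using assms by (auto simp: eventually_at_top_linorder)
  then have tail_ge: "\<And>s. s0 \<le> s \<Longrightarrow> U * tail s \<le> tail_rho s"
    using tail_pos by (simp add: ratio_def le_divide_eq)
  define \<psi> where "\<psi> x = p * U * (conv_tail_small A x / tail x) + p * (sum_tail_W_small A x / tail x)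
    + (1 - p) * (diff_tail x / tail x)" for x
  have "(\<psi> \<longlongrightarrow> p * U * mgf_upto A + p * mgf_rho_upto A + (1 - p) * laplace_rho) at_top"
    unfolding \<psi>_def
    by (intro tendsto_intros tendsto_conv_tail_small_ratio tendsto_sum_tail_W_small_ratio tendsto_diff_tail_ratio)
  then have "ereal (p * U * mgf_upto A + p * mgf_rho_upto A + (1 - p) * laplace_rho)
      = Liminf at_top (\<lambda>x. ereal (\<psi> x))"
    by (intro lim_imp_Liminf[symmetric]) (simp_all add: lim_ereal)
  also have "eventually (\<lambda>x. \<psi> x \<le> ratio x) at_top"
    using eventually_ge_at_top[of "max (s0 + A) (max 0 (2 * A))"]
  proof eventually_elim
    case (elim x)
    have "\<psi> x = (p * (U * conv_tail_small A x + sum_tail_W_small A x) + (1 - p) * diff_tail x) / tail x"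
      unfolding \<psi>_def using tail_pos[of x] by (simp add: field_simps)
    also have "\<dots> \<le> ratio x"
      unfolding ratio_def using tail_rho_lower[OF tail_ge elim] tail_pos[of x]
      by (intro divide_right_mono) simp_all
    finally show ?case .
  qed
  then have "Liminf at_top (\<lambda>x. ereal (\<psi> x)) \<le> Liminf at_top (\<lambda>x. ereal (ratio x))"
    by (intro Liminf_mono) simp
  finally show ?thesis .
qed

definition ratio_inf :: real where "ratio_inf = real_of_ereal (Liminf at_top (\<lambda>x. ereal (ratio x)))"
definition ratio_sup :: real where "ratio_sup = real_of_ereal (Limsup at_top (\<lambda>x. ereal (ratio x)))"

lemma Liminf_ratio: "Liminf at_top (\<lambda>x. ereal (ratio x)) = ereal ratio_inf"
  and Limsup_ratio: "Limsup at_top (\<lambda>x. ereal (ratio x)) = ereal ratio_sup"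
proof -
  have "0 \<le> Liminf at_top (\<lambda>x. ereal (ratio x))"
    by (rule Liminf_bounded) (simp add: ratio_nonneg)
  moreover have "Liminf at_top (\<lambda>x. ereal (ratio x)) \<le> Limsup at_top (\<lambda>x. ereal (ratio x))"
    by (rule Liminf_le_Limsup) simp
  moreover have "Limsup at_top (\<lambda>x. ereal (ratio x)) \<le> ereal \<alpha>"
    by (rule Limsup_bounded) (simp add: ratio_le)
  ultimately show "Liminf at_top (\<lambda>x. ereal (ratio x)) = ereal ratio_inf"
    "Limsup at_top (\<lambda>x. ereal (ratio x)) = ereal ratio_sup"
    unfolding ratio_inf_def ratio_sup_def
    by (cases "Liminf at_top (\<lambda>x. ereal (ratio x))"; cases "Limsup at_top (\<lambda>x. ereal (ratio x))"; simp)+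
qed

lemma ratio_inf_nonneg: "0 \<le> ratio_inf"
proof -
  have "0 \<le> Liminf at_top (\<lambda>x. ereal (ratio x))"
    by (rule Liminf_bounded) (simp add: ratio_nonneg)
  then show ?thesis by (simp add: Liminf_ratio)
qed

lemma ratio_inf_le_sup: "ratio_inf \<le> ratio_sup"
proof -
  have "Liminf at_top (\<lambda>x. ereal (ratio x)) \<le> Limsup at_top (\<lambda>x. ereal (ratio x))"
    by (rule Liminf_le_Limsup) simp
  then show ?thesis by (simp add: Liminf_ratio Limsup_ratio)
qed

text \<open>Both inequalities come from feeding the bound \<open>ratio \<ge> ratio_inf - e\<close>, resp.
  \<open>ratio \<le> ratio_sup + e\<close>, valid for large arguments, back into the tail equation.\<close>

lemma ratio_inf_ge_upto: "p * ratio_inf * mgf_upto A + p * mgf_rho_upto A + (1 - p) * laplace_rho \<le> ratio_inf"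
proof (rule field_le_epsilon_mult[where c = "p * mgf_upto A"])
  fix e :: real assume "0 < e"
  then have "ereal (ratio_inf - e) < Liminf at_top (\<lambda>x. ereal (ratio x))"
    by (simp add: Liminf_ratio)
  then have "eventually (\<lambda>x. ereal (ratio_inf - e) < ereal (ratio x)) at_top"
    by (rule less_LiminfD)
  then have "eventually (\<lambda>x. ratio_inf - e \<le> ratio x) at_top"
    by eventually_elim simp
  from Liminf_ratio_ge[OF this, of A]
  show "p * ratio_inf * mgf_upto A + p * mgf_rho_upto A + (1 - p) * laplace_rho \<le> ratio_inf + e * (p * mgf_upto A)"
    by (simp add: Liminf_ratio algebra_simps)
qed (use p_nonneg mgf_upto_nonneg in simp)

lemma ratio_sup_le_upto:
  "ratio_sup \<le> p * ratio_sup * mgf_upto A + p * mgf_rho_upto A + p * \<alpha> * (2 * mgf - 2 * mgf_upto A) + (1 - p) * laplace_rho"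
proof (rule field_le_epsilon_mult[where c = "p * mgf_upto A"])
  fix e :: real assume "0 < e"
  then have "Limsup at_top (\<lambda>x. ereal (ratio x)) < ereal (ratio_sup + e)"
    by (simp add: Limsup_ratio)
  then have "eventually (\<lambda>x. ereal (ratio x) < ereal (ratio_sup + e)) at_top"
    by (rule Limsup_lessD)
  then have "eventually (\<lambda>x. ratio x \<le> ratio_sup + e) at_top"
    by eventually_elim simp
  from Limsup_ratio_le[OF this, of A]
  show "ratio_sup \<le> p * ratio_sup * mgf_upto A + p * mgf_rho_upto A + p * \<alpha> * (2 * mgf - 2 * mgf_upto A)
      + (1 - p) * laplace_rho + e * (p * mgf_upto A)"
    by (simp add: Limsup_ratio algebra_simps)
qed (use p_nonneg mgf_upto_nonneg in simp)

lemma integrable_exp_rho: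
  assumes "0 < p"
  shows "integrable \<rho> (\<lambda>w. exp (\<gamma> * w))"
proof (rule integrable_bounded_truncations[OF sets_rho])
  show "integrable \<rho> (\<lambda>w. indicator {..A} w * exp (\<gamma> * w))" for A
    by (rule rho.integrable_const_bound[where B="exp (\<gamma> * A)"])
      (use gamma_pos in \<open>auto simp: borel_measurable_rho_eq indicator_def\<close>)
  have "p * mgf_rho_upto A \<le> ratio_inf" for A
    using ratio_inf_ge_upto[of A] p_nonneg p_less_1 ratio_inf_nonneg mgf_upto_nonneg[of A] laplace_rho_nonneg
    by (smt (verit) mult_nonneg_nonneg)
  then show "(\<integral>w. indicator {..A} w * exp (\<gamma> * w) \<partial>\<rho>) \<le> ratio_inf / p" for A
    using assms unfolding mgf_rho_upto_def by (simp add: le_divide_eq mult.commute)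
qed auto

lemma tendsto_mgf_rho_upto: "((\<lambda>A. p * mgf_rho_upto A) \<longlongrightarrow> p * mgf_rho) at_top"
proof (cases "p = 0")
  case False
  with p_nonneg have "(mgf_rho_upto \<longlongrightarrow> mgf_rho) at_top"
    unfolding mgf_rho_upto_def mgf_rho_def
    by (intro tendsto_integral_indicator_atMost[OF sets_rho] integrable_exp_rho) simp
  then show ?thesis by (intro tendsto_mult tendsto_const)
qed simp

lemma ratio_inf_ge: "p * ratio_inf * mgf + p * mgf_rho + (1 - p) * laplace_rho \<le> ratio_inf"
proof (rule tendsto_le[OF _ tendsto_const])
  show "((\<lambda>A. p * ratio_inf * mgf_upto A + p * mgf_rho_upto A + (1 - p) * laplace_rho)
      \<longlongrightarrow> p * ratio_inf * mgf + p * mgf_rho + (1 - p) * laplace_rho) at_top"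
    by (intro tendsto_intros tendsto_mgf_upto tendsto_mgf_rho_upto)
qed (auto intro: always_eventually ratio_inf_ge_upto)

lemma ratio_sup_le: "ratio_sup \<le> p * ratio_sup * mgf + p * mgf_rho + (1 - p) * laplace_rho"
proof (rule tendsto_le[OF _ _ tendsto_const])
  have "((\<lambda>A. p * ratio_sup * mgf_upto A + p * mgf_rho_upto A + p * \<alpha> * (2 * mgf - 2 * mgf_upto A) + (1 - p) * laplace_rho)
      \<longlongrightarrow> p * ratio_sup * mgf + p * mgf_rho + p * \<alpha> * (2 * mgf - 2 * mgf) + (1 - p) * laplace_rho) at_top"
    by (intro tendsto_intros tendsto_mgf_upto tendsto_mgf_rho_upto)
  then show "((\<lambda>A. p * ratio_sup * mgf_upto A + p * mgf_rho_upto A + p * \<alpha> * (2 * mgf - 2 * mgf_upto A) + (1 - p) * laplace_rho)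
      \<longlongrightarrow> p * ratio_sup * mgf + p * mgf_rho + (1 - p) * laplace_rho) at_top"
    by simp
qed (auto intro: always_eventually ratio_sup_le_upto)

theorem tendsto_ratio: "(ratio \<longlongrightarrow> tail_constant) at_top"
proof -
  have d: "0 < 1 - p * mgf" using p_mgf_less_1 by simp
  have "tail_constant \<le> ratio_inf"
    unfolding tail_constant_def using ratio_inf_ge d by (simp add: divide_le_eq algebra_simps)
  moreover have "ratio_sup \<le> tail_constant"
    unfolding tail_constant_def using ratio_sup_le d by (simp add: le_divide_eq algebra_simps)
  ultimately have "ratio_inf = tail_constant" "ratio_sup = tail_constant"
    using ratio_inf_le_sup by auto
  then have "((\<lambda>x. ereal (ratio x)) \<longlongrightarrow> ereal tail_constant) at_top"
    by (intro Liminf_eq_Limsup) (simp_all add: Liminf_ratio Limsup_ratio)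
  then show ?thesis by (simp add: lim_ereal)
qed

end

lemma tail_constant_eq:
  fixes p \<phi> a b K1 K2 :: real
  assumes "p < 1" "p * \<phi> < 1"
    and "p * a = p * (p * (\<phi> * a + K1) + (1 - p) * (\<phi> * b + K2))"
  shows "(1 - p) * p / (1 - p * \<phi>)^2 * (K2 + p / (1 - p) * K1) + (1 - p) / (1 - p * \<phi>)^2 * b
    = (p * a + (1 - p) * b) / (1 - p * \<phi>)"
proof -
  define d where "d = 1 - p * \<phi>"
  have d: "d \<noteq> 0" and "1 - p \<noteq> 0" using assms(1,2) by (auto simp: d_def)
  then have "(1 - p) * p / d^2 * (K2 + p / (1 - p) * K1) + (1 - p) / d^2 * b
      = ((1 - p) * p * K2 + p * p * K1 + (1 - p) * b) / d^2"
    by (simp add: field_simps)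
  also have "(1 - p) * p * K2 + p * p * K1 + (1 - p) * b = (p * a + (1 - p) * b) * d"
    using assms(3) unfolding d_def by (simp add: algebra_simps)
  finally show ?thesis
    using d by (simp add: d_def power2_eq_square)
qed

section \<open>The reflected random recursion\<close>

locale reflected_recursion =
  fixes M :: "'a measure" and X Y W E :: "'a \<Rightarrow> real" and p \<gamma> :: real
  assumes prob_space_M: "prob_space M"
    and indep: "prob_space.indep_vars M (\<lambda>_. borel) (\<lambda>i. [X, Y, W, E] ! i) {..<4}"
    and X_neg: "measure M {\<omega> \<in> space M. X \<omega> < 0} > 0"
    and p_nonneg: "0 \<le> p" and p_less_1: "p < 1"
    and Y_1: "measure M {\<omega> \<in> space M. Y \<omega> = 1} = p"
    and Y_minus_1: "measure M {\<omega> \<in> space M. Y \<omega> = -1} = 1 - p"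
    and gamma_pos: "\<gamma> > 0"
    and class_S_X: "class_S \<gamma> (distr M borel X)"
    and p_mgf_less_1: "p * (\<integral>\<omega>. exp (\<gamma> * X \<omega>) \<partial>M) < 1"
    and stationary: "distr M borel (\<lambda>\<omega>. max 0 (Y \<omega> * W \<omega> + X \<omega>)) = distr M borel W"
    and exponential_E: "distributed M lborel E (exponential_density \<gamma>)"
begin

sublocale P: prob_space M by (rule prob_space_M)

lemma measurable_XYWE[measurable]:
  "X \<in> borel_measurable M" "Y \<in> borel_measurable M" "W \<in> borel_measurable M" "E \<in> borel_measurable M"
proof -
  have "\<forall>i\<in>{..<4::nat}. ([X, Y, W, E] ! i) \<in> borel_measurable M"
    using indep unfolding P.indep_vars_def by blast
  then show "X \<in> borel_measurable M" "Y \<in> borel_measurable M" "W \<in> borel_measurable M" "E \<in> borel_measurable M"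
    by (auto dest: bspec[where x=0] bspec[where x=1] bspec[where x=2] bspec[where x=3])
qed

text \<open>Independence is used through the vectors \<open>coords A \<omega>\<close> of the variables with indices in \<open>A\<close>
  (\<open>0, 1, 2, 3\<close> standing for \<open>X, Y, W, E\<close>).\<close>

definition coords :: "nat set \<Rightarrow> 'a \<Rightarrow> nat \<Rightarrow> real" where
  "coords A \<omega> = restrict (\<lambda>i. ([X, Y, W, E] ! i) \<omega>) A"

lemma indep_var_coords:
  fixes A B :: "nat set" and f g :: "(nat \<Rightarrow> real) \<Rightarrow> real"
  assumes "A \<inter> B = {}" "A \<subseteq> {..<4}" "B \<subseteq> {..<4}"
    and f: "f \<in> borel_measurable (PiM A (\<lambda>_. borel))" and g: "g \<in> borel_measurable (PiM B (\<lambda>_. borel))"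
  shows "P.indep_var borel (\<lambda>\<omega>. f (coords A \<omega>)) borel (\<lambda>\<omega>. g (coords B \<omega>))"
  using P.indep_var_compose[OF P.indep_var_restrict[OF indep assms(1-3)] f g] unfolding coords_def comp_def .

lemma coords_apply: "i \<in> A \<Longrightarrow> coords A \<omega> i = ([X, Y, W, E] ! i) \<omega>"
  unfolding coords_def by simp

lemma measurable_coords: "A \<subseteq> {..<4} \<Longrightarrow> coords A \<in> measurable M (PiM A (\<lambda>_. borel))"
  unfolding coords_def
proof (rule measurable_restrict)
  fix i assume "A \<subseteq> {..<4}" "i \<in> A"
  then have "i < 4" by auto
  then have "i = 0 \<or> i = 1 \<or> i = 2 \<or> i = 3" by auto
  then show "(\<lambda>\<omega>. ([X, Y, W, E] ! i) \<omega>) \<in> borel_measurable M" using measurable_XYWE by auto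
qed

lemma distr_pair_coords:
  fixes A B :: "nat set" and f :: "(nat \<Rightarrow> real) \<Rightarrow> 'b" and g :: "(nat \<Rightarrow> real) \<Rightarrow> 'c"
  assumes AB: "A \<inter> B = {}" "A \<subseteq> {..<4}" "B \<subseteq> {..<4}"
    and f: "f \<in> measurable (PiM A (\<lambda>_. borel)) S" and g: "g \<in> measurable (PiM B (\<lambda>_. borel)) T"
  shows "distr M (S \<Otimes>\<^sub>M T) (\<lambda>\<omega>. (f (coords A \<omega>), g (coords B \<omega>))) =
         distr M S (\<lambda>\<omega>. f (coords A \<omega>)) \<Otimes>\<^sub>M distr M T (\<lambda>\<omega>. g (coords B \<omega>))"
proof -
  have ind: "P.indep_var (PiM A (\<lambda>_. borel)) (coords A) (PiM B (\<lambda>_. borel)) (coords B)"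
    using P.indep_var_restrict[OF indep AB] unfolding coords_def[abs_def] .
  have mA: "coords A \<in> measurable M (PiM A (\<lambda>_. borel))" and mB: "coords B \<in> measurable M (PiM B (\<lambda>_. borel))"
    using measurable_coords AB by auto
  have D: "distr M (PiM A (\<lambda>_. borel) \<Otimes>\<^sub>M PiM B (\<lambda>_. borel)) (\<lambda>\<omega>. (coords A \<omega>, coords B \<omega>)) =
      distr M (PiM A (\<lambda>_. borel)) (coords A) \<Otimes>\<^sub>M distr M (PiM B (\<lambda>_. borel)) (coords B)"
    using P.indep_var_distribution_eq[THEN iffD1, OF ind] by simp
  have pm: "(\<lambda>\<omega>. (coords A \<omega>, coords B \<omega>)) \<in> measurable M (PiM A (\<lambda>_. borel) \<Otimes>\<^sub>M PiM B (\<lambda>_. borel))"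
    using mA mB by (rule measurable_Pair)
  have h: "(\<lambda>(x, y). (f x, g y)) \<in> measurable (PiM A (\<lambda>_. borel) \<Otimes>\<^sub>M PiM B (\<lambda>_. borel)) (S \<Otimes>\<^sub>M T)"
    using f g by measurable
  have "distr M (S \<Otimes>\<^sub>M T) (\<lambda>\<omega>. (f (coords A \<omega>), g (coords B \<omega>))) =
      distr (distr M (PiM A (\<lambda>_. borel) \<Otimes>\<^sub>M PiM B (\<lambda>_. borel)) (\<lambda>\<omega>. (coords A \<omega>, coords B \<omega>))) (S \<Otimes>\<^sub>M T) (\<lambda>(x, y). (f x, g y))"
    by (subst distr_distr[OF h pm]) (simp add: comp_def)
  also have "\<dots> = distr (distr M (PiM A (\<lambda>_. borel)) (coords A) \<Otimes>\<^sub>M distr M (PiM B (\<lambda>_. borel)) (coords B)) (S \<Otimes>\<^sub>M T) (\<lambda>(x, y). (f x, g y))"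
    unfolding D ..
  also have "\<dots> = distr (distr M (PiM A (\<lambda>_. borel)) (coords A)) S f \<Otimes>\<^sub>M distr (distr M (PiM B (\<lambda>_. borel)) (coords B)) T g"
  proof (rule pair_measure_distr[symmetric])
    show "f \<in> measurable (distr M (PiM A (\<lambda>_. borel)) (coords A)) S" using f by simp
    show "g \<in> measurable (distr M (PiM B (\<lambda>_. borel)) (coords B)) T" using g by simp
    show "sigma_finite_measure (distr (distr M (PiM B (\<lambda>_. borel)) (coords B)) T g)"
    proof (intro prob_space_imp_sigma_finite prob_space.prob_space_distr P.prob_space_distr mB)
      show "g \<in> measurable (distr M (PiM B (\<lambda>_. borel)) (coords B)) T" using g by simp
    qed (rule prob_space_M)
  qed
  also have "\<dots> = distr M S (\<lambda>\<omega>. f (coords A \<omega>)) \<Otimes>\<^sub>M distr M T (\<lambda>\<omega>. g (coords B \<omega>))"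
    using distr_distr[OF f mA] distr_distr[OF g mB] by (simp add: comp_def)
  finally show ?thesis .
qed

definition law_X :: "real measure" where "law_X = distr M borel X"
definition law_Y :: "real measure" where "law_Y = distr M borel Y"
definition law_W :: "real measure" where "law_W = distr M borel W"
definition law_YX :: "(real \<times> real) measure" where
  "law_YX = distr M (borel \<Otimes>\<^sub>M borel) (\<lambda>\<omega>. (Y \<omega>, X \<omega>))"

lemma prob_space_law_X: "prob_space law_X" unfolding law_X_def by (rule P.prob_space_distr) simp
lemma prob_space_law_Y: "prob_space law_Y" unfolding law_Y_def by (rule P.prob_space_distr) simp
lemma prob_space_law_W: "prob_space law_W" unfolding law_W_def by (rule P.prob_space_distr) simp
lemma prob_space_law_YX: "prob_space law_YX" unfolding law_YX_def by (rule P.prob_space_distr) simp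

lemma sets_law_X[simp, measurable_cong]: "sets law_X = sets borel" unfolding law_X_def by simp
lemma sets_law_Y[simp, measurable_cong]: "sets law_Y = sets borel" unfolding law_Y_def by simp
lemma sets_law_W[simp, measurable_cong]: "sets law_W = sets borel" unfolding law_W_def by simp
lemma sets_law_YX[simp, measurable_cong]: "sets law_YX = sets (borel \<Otimes>\<^sub>M borel)" unfolding law_YX_def by simp

lemma space_law_Y[simp]: "space law_Y = UNIV" unfolding law_Y_def by simp
lemma space_law_W[simp]: "space law_W = UNIV" unfolding law_W_def by simp

lemma space_law_YX[simp]: "space law_YX = UNIV"
  unfolding law_YX_def by (simp add: space_pair_measure)

sublocale YX: prob_space law_YX by (rule prob_space_law_YX)

sublocale X: class_S_law law_X \<gamma>
  by (intro class_S_law.intro class_S_law_axioms.intro prob_space_law_X)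
    (simp_all add: gamma_pos class_S_X[folded law_X_def])

lemma law_YX_eq: "law_YX = law_Y \<Otimes>\<^sub>M law_X"
proof -
  have "distr M (borel \<Otimes>\<^sub>M borel) (\<lambda>\<omega>. ((\<lambda>u. u 1) (coords {1} \<omega>), (\<lambda>u. u 0) (coords {0} \<omega>))) =
      distr M borel (\<lambda>\<omega>. (\<lambda>u. u 1) (coords {1} \<omega>)) \<Otimes>\<^sub>M distr M borel (\<lambda>\<omega>. (\<lambda>u. u 0) (coords {0} \<omega>))"
    by (rule distr_pair_coords) (auto intro: measurable_component_singleton)
  then show ?thesis unfolding law_YX_def law_Y_def law_X_def by (simp add: coords_apply)
qed

lemma distr_W_YX: "distr M (borel \<Otimes>\<^sub>M (borel \<Otimes>\<^sub>M borel)) (\<lambda>\<omega>. (W \<omega>, (Y \<omega>, X \<omega>))) = law_W \<Otimes>\<^sub>M law_YX"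
proof -
  have m: "(\<lambda>u. (u 1, u 0)) \<in> measurable (PiM {1, 0} (\<lambda>_. borel)) (borel \<Otimes>\<^sub>M borel)"
    by (intro measurable_Pair measurable_component_singleton) auto
  have "distr M (borel \<Otimes>\<^sub>M (borel \<Otimes>\<^sub>M borel)) (\<lambda>\<omega>. ((\<lambda>u. u 2) (coords {2} \<omega>), (\<lambda>u. (u 1, u 0)) (coords {1, 0} \<omega>))) =
      distr M borel (\<lambda>\<omega>. (\<lambda>u. u 2) (coords {2} \<omega>)) \<Otimes>\<^sub>M distr M (borel \<Otimes>\<^sub>M borel) (\<lambda>\<omega>. (\<lambda>u. (u 1, u 0)) (coords {1, 0} \<omega>))"
    by (rule distr_pair_coords[OF _ _ _ _ m]) (auto intro: measurable_component_singleton)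
  then show ?thesis unfolding law_YX_def law_W_def by (simp add: coords_apply)
qed

lemma X_mgf_eq: "X.mgf = (\<integral>\<omega>. exp (\<gamma> * X \<omega>) \<partial>M)"
  unfolding X.mgf_def unfolding law_X_def by (rule integral_distr) simp_all

lemma tail_X_eq: "X.tail x = measure M {\<omega> \<in> space M. X \<omega> > x}"
  unfolding X.tail_def unfolding law_X_def by (subst measure_distr) (auto simp: vimage_def Int_def conj_commute)

lemma law_Y_1: "measure law_Y {1} = p"
  unfolding law_Y_def using Y_1 by (subst measure_distr) (auto simp: vimage_def Collect_conj_eq Int_commute)

lemma law_Y_minus_1: "measure law_Y {-1} = 1 - p"
  unfolding law_Y_def using Y_minus_1 by (subst measure_distr) (auto simp: vimage_def Collect_conj_eq Int_commute)

lemma law_Y_other: "measure law_Y (- {1, -1}) = 0"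
proof -
  interpret Y: prob_space law_Y by (rule prob_space_law_Y)
  have "measure law_Y {1, -1} = measure law_Y {1} + measure law_Y {-1}"
    by (subst Y.finite_measure_Union[symmetric]) (auto intro!: arg_cong[where f="measure law_Y"])
  then have "measure law_Y {1, -1} = 1" using law_Y_1 law_Y_minus_1 by simp
  then show ?thesis using Y.prob_compl[of "{1, -1}"] by (simp add: Compl_eq_Diff_UNIV)
qed

lemma AE_W_nonneg: "AE \<omega> in M. 0 \<le> W \<omega>"
proof -
  have "measure M {\<omega> \<in> space M. W \<omega> < 0} = measure (distr M borel W) {..<0}"
    by (subst measure_distr) (auto simp: vimage_def Int_def conj_commute)
  also have "\<dots> = measure M {\<omega> \<in> space M. max 0 (Y \<omega> * W \<omega> + X \<omega>) < 0}"
    unfolding stationary[symmetric] by (subst measure_distr) (auto simp: vimage_def Int_def)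
  finally have "{\<omega> \<in> space M. W \<omega> < 0} \<in> null_sets M"
    by (simp add: null_sets_def P.emeasure_eq_measure)
  then show ?thesis
    by (rule AE_I') auto
qed

lemma AE_law_W_nonneg: "AE w in law_W. 0 \<le> w"
  unfolding law_W_def using AE_W_nonneg by (subst AE_distr_iff) auto

text \<open>The state is clamped at \<open>0\<close>
  so that \<open>Y = -1\<close>, \<open>X \<le> 0\<close> resets it to \<open>0\<close> whatever the input law.\<close>

definition recursion_map :: "real \<times> (real \<times> real) \<Rightarrow> real" where
  "recursion_map z = max 0 (fst (snd z) * max 0 (fst z) + snd (snd z))"

definition step :: "real measure \<Rightarrow> real measure" where
  "step \<rho> = distr (\<rho> \<Otimes>\<^sub>M law_YX) borel recursion_map"

lemma measurable_recursion_map[measurable]: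
  "recursion_map \<in> borel_measurable (borel \<Otimes>\<^sub>M (borel \<Otimes>\<^sub>M borel))"
  unfolding recursion_map_def by measurable

lemma measurable_recursion_map':
  assumes "sets \<rho> = sets borel"
  shows "recursion_map \<in> borel_measurable (\<rho> \<Otimes>\<^sub>M law_YX)"
proof -
  have "sets (\<rho> \<Otimes>\<^sub>M law_YX) = sets (borel \<Otimes>\<^sub>M (borel \<Otimes>\<^sub>M borel))"
    using assms by (intro sets_pair_measure_cong) simp_all
  then show ?thesis using measurable_cong_sets measurable_recursion_map by blast
qed

lemma prob_space_step:
  assumes "prob_space \<rho>" "sets \<rho> = sets borel"
  shows "prob_space (step \<rho>)" "sets (step \<rho>) = sets borel"
proof -
  interpret prob_space "\<rho> \<Otimes>\<^sub>M law_YX" by (rule prob_space_pair[OF assms(1) prob_space_law_YX])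
  show "prob_space (step \<rho>)" unfolding step_def by (rule prob_space_distr[OF measurable_recursion_map'[OF assms(2)]])
  show "sets (step \<rho>) = sets borel" unfolding step_def by simp
qed

lemma step_law_W: "step law_W = law_W"
proof -
  have "law_W = distr M borel (\<lambda>\<omega>. max 0 (Y \<omega> * W \<omega> + X \<omega>))" unfolding law_W_def stationary ..
  also have "\<dots> = distr M borel (\<lambda>\<omega>. recursion_map (W \<omega>, (Y \<omega>, X \<omega>)))"
    using AE_W_nonneg by (intro distr_cong_AE) (auto simp: recursion_map_def elim!: eventually_mono)
  also have "\<dots> = distr (distr M (borel \<Otimes>\<^sub>M (borel \<Otimes>\<^sub>M borel)) (\<lambda>\<omega>. (W \<omega>, (Y \<omega>, X \<omega>)))) borel recursion_map"
    by (subst distr_distr) (simp_all add: comp_def)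
  also have "\<dots> = step law_W" unfolding distr_W_YX step_def
    by (intro distr_cong) (simp_all add: sets_pair_measure_cong)
  finally show ?thesis ..
qed

lemma law_YX_recursion_gt:
  assumes "0 \<le> x"
  shows "measure law_YX {(y, t). x < max 0 (y * m + t)} = p * X.tail (x - m) + (1 - p) * X.tail (x + m)"
proof -
  define Z where "Z = {(y, t). x < max 0 (y * m + t)}"
  define Z1 where "Z1 = {1::real} \<times> {x - m<..}"
  define Z2 where "Z2 = {-1::real} \<times> {x + m<..}"
  define Z3 where "Z3 = Z \<inter> ((- {1, -1}) \<times> UNIV)"
  have Z: "Z \<in> sets law_YX"
    unfolding Z_def case_prod_unfold sets_law_YX by (rule Collect_in_sets_pair_borel[OF refl refl]) measurable
  then have sets: "Z1 \<in> YX.events" "Z2 \<in> YX.events" "Z3 \<in> YX.events"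
    unfolding Z1_def Z2_def Z3_def by auto
  have "Z = Z1 \<union> (Z2 \<union> Z3)" "Z2 \<inter> Z3 = {}" "Z1 \<inter> (Z2 \<union> Z3) = {}"
    unfolding Z_def Z1_def Z2_def Z3_def using assms by (auto simp: max_def split: if_splits)
  then have "measure law_YX Z = measure law_YX Z1 + measure law_YX Z2 + measure law_YX Z3"
    using sets by (simp add: YX.finite_measure_Union)
  moreover have "measure law_YX Z3 \<le> measure law_YX ((- {1, -1}) \<times> UNIV)"
    unfolding Z3_def by (intro YX.finite_measure_mono) auto
  moreover have "measure law_YX ((- {1, -1}) \<times> UNIV) = 0"
    unfolding law_YX_eq using law_Y_other
    by (subst measure_pair_measure_Times[OF prob_space_law_Y prob_space_law_X]) auto
  ultimately show ?thesis
    unfolding Z1_def Z2_def Z_def law_YX_eq using law_Y_other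
    by (simp add: measure_pair_measure_Times[OF prob_space_law_Y prob_space_law_X] law_Y_1 law_Y_minus_1 X.tail_def
        measure_nonneg antisym)
qed

lemma step_tail:
  assumes \<rho>: "prob_space \<rho>" "sets \<rho> = sets borel" and "0 \<le> x"
  shows "measure (step \<rho>) {w. x < max 0 w}
    = p * (\<integral>w. X.tail (x - max 0 w) \<partial>\<rho>) + (1 - p) * (\<integral>w. X.tail (x + max 0 w) \<partial>\<rho>)"
proof -
  interpret R: prob_space \<rho> by fact
  have mc: "borel_measurable \<rho> = borel_measurable borel" by (rule measurable_cong_sets[OF \<rho>(2) refl])
  have space: "space (\<rho> \<Otimes>\<^sub>M law_YX) = UNIV"
    using \<rho>(2) by (simp add: space_pair_measure sets_eq_imp_space_eq[OF \<rho>(2)])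
  define S where "S = {z. x < recursion_map z}"
  have S: "S \<in> sets (\<rho> \<Otimes>\<^sub>M law_YX)"
    using measurable_sets[OF measurable_recursion_map'[OF \<rho>(2)], of "{x<..}"]
    by (simp add: S_def space vimage_def)
  have "measure (step \<rho>) {w. x < max 0 w} = measure (\<rho> \<Otimes>\<^sub>M law_YX) S"
    unfolding step_def using \<rho>(2)
    by (subst measure_distr[OF measurable_recursion_map']) (auto simp: S_def space recursion_map_def)
  also have "\<dots> = (\<integral>w. measure law_YX (Pair w -` S) \<partial>\<rho>)"
    by (rule measure_pair_measure_eq_integral_Pair(1)[OF \<rho>(1) prob_space_law_YX S])
  also have "\<dots> = (\<integral>w. p * X.tail (x - max 0 w) + (1 - p) * X.tail (x + max 0 w) \<partial>\<rho>)"
  proof (intro Bochner_Integration.integral_cong refl)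
    fix w
    have "Pair w -` S = {(y, t). x < max 0 (y * max 0 w + t)}"
      unfolding S_def recursion_map_def by auto
    then show "measure law_YX (Pair w -` S) = p * X.tail (x - max 0 w) + (1 - p) * X.tail (x + max 0 w)"
      using law_YX_recursion_gt[OF \<open>0 \<le> x\<close>] by simp
  qed
  also have "\<dots> = p * (\<integral>w. X.tail (x - max 0 w) \<partial>\<rho>) + (1 - p) * (\<integral>w. X.tail (x + max 0 w) \<partial>\<rho>)"
  proof -
    have "integrable \<rho> (\<lambda>w. X.tail (x - max 0 w))" "integrable \<rho> (\<lambda>w. X.tail (x + max 0 w))"
      by (rule R.integrable_const_bound[where B=1]; simp add: mc X.tail_nonneg X.tail_le_1)+
    then show ?thesis by simp
  qed
  finally show ?thesis .
qed

text \<open>Coupling through the reset event \<open>{Y = -1, X \<le> 0}\<close>: the step operator contracts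
  the distance between laws, tested against bounded functions, by the factor \<open>1 - reset_prob\<close>.\<close>

definition reset_set :: "(real \<times> real) set" where "reset_set = {z. fst z = -1 \<and> snd z \<le> 0}"
definition reset_prob :: real where "reset_prob = measure law_YX reset_set"
definition nonreset_integral :: "(real \<Rightarrow> real) \<Rightarrow> real \<Rightarrow> real" where
  "nonreset_integral g w = (\<integral>z. indicator (- reset_set) z * g (recursion_map (w, z)) \<partial>law_YX)"

lemma reset_set_in_sets: "reset_set \<in> sets law_YX"
  unfolding reset_set_def sets_law_YX by (rule Collect_in_sets_pair_borel[OF refl refl]) measurable

lemma Compl_reset_set_in_sets: "- reset_set \<in> sets law_YX"
  by (metis Compl_eq_Diff_UNIV reset_set_in_sets sets.compl_sets space_law_YX)

lemma reset_prob_eq: "reset_prob = (1 - p) * measure law_X {..0}"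
proof -
  have e: "reset_set = {-1} \<times> {..0}" unfolding reset_set_def by auto
  show ?thesis unfolding reset_prob_def law_YX_eq e
    by (simp add: measure_pair_measure_Times[OF prob_space_law_Y prob_space_law_X] law_Y_minus_1)
qed

lemma reset_prob_pos: "0 < reset_prob"
proof -
  have "measure M {\<omega> \<in> space M. X \<omega> < 0} = measure law_X {..<0}"
    unfolding law_X_def by (subst measure_distr) (auto simp: vimage_def Int_def conj_commute)
  also have "\<dots> \<le> measure law_X {..0}"
    by (intro X.finite_measure_mono) auto
  finally have "0 < measure law_X {..0}" using X_neg by simp
  then show ?thesis unfolding reset_prob_eq using p_less_1 by simp
qed

lemma reset_prob_le_1: "reset_prob \<le> 1"
  unfolding reset_prob_def using prob_space_law_YX by (simp add: prob_space.prob_le_1)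

lemma borel_measurable_recursion_map_slice:
  fixes g :: "real \<Rightarrow> real"
  assumes g: "g \<in> borel_measurable borel"
  shows "(\<lambda>z. g (recursion_map (w, z))) \<in> borel_measurable law_YX"
proof -
  have "(\<lambda>z. g (recursion_map (w, z))) \<in> borel_measurable (borel \<Otimes>\<^sub>M borel)" using g by measurable
  then show ?thesis using measurable_cong_sets[OF sets_law_YX refl] by blast
qed

lemma integrable_nonreset:
  fixes g :: "real \<Rightarrow> real"
  assumes g: "g \<in> borel_measurable borel" and gb: "\<And>v. 0 \<le> g v" "\<And>v. g v \<le> Bd"
  shows "integrable law_YX (\<lambda>z. indicator (- reset_set) z * g (recursion_map (w, z)))"
proof -
  have m: "(\<lambda>z. indicator (- reset_set) z * g (recursion_map (w, z))) \<in> borel_measurable law_YX"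
  proof (rule borel_measurable_times)
    show "(\<lambda>z. g (recursion_map (w, z))) \<in> borel_measurable law_YX" by (rule borel_measurable_recursion_map_slice[OF g])
    show "indicator (- reset_set) \<in> borel_measurable law_YX" by (rule borel_measurable_indicator[OF Compl_reset_set_in_sets])
  qed
  have "0 \<le> Bd" using gb(1)[of 0] gb(2)[of 0] by simp
  then show ?thesis
    by (intro YX.integrable_const_bound[where B=Bd] m AE_I2) (use gb in \<open>auto simp: indicator_def abs_of_nonneg\<close>)
qed

lemma integral_recursion_map_split:
  fixes g :: "real \<Rightarrow> real"
  assumes g: "g \<in> borel_measurable borel" and gb: "\<And>v. 0 \<le> g v" "\<And>v. g v \<le> Bd"
  shows "(\<integral>z. g (recursion_map (w, z)) \<partial>law_YX) = g 0 * reset_prob + nonreset_integral g w"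
proof -
  have "(\<integral>z. g (recursion_map (w, z)) \<partial>law_YX) = (\<integral>z. indicator reset_set z * g 0 + indicator (- reset_set) z * g (recursion_map (w, z)) \<partial>law_YX)"
  proof (intro Bochner_Integration.integral_cong refl)
    fix z
    show "g (recursion_map (w, z)) = indicator reset_set z * g 0 + indicator (- reset_set) z * g (recursion_map (w, z))"
    proof (cases "z \<in> reset_set")
      case True
      then have "recursion_map (w, z) = 0" unfolding reset_set_def recursion_map_def by (auto simp: max_def)
      then show ?thesis using True by simp
    qed simp
  qed
  also have "\<dots> = (\<integral>z. indicator reset_set z * g 0 \<partial>law_YX) + nonreset_integral g w"
    unfolding nonreset_integral_def
  proof (rule Bochner_Integration.integral_add)
    show "integrable law_YX (\<lambda>z. indicator reset_set z * g 0)"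
      using integrable_real_mult_indicator[OF reset_set_in_sets, of "\<lambda>_. g 0"] by (simp add: mult.commute)
    show "integrable law_YX (\<lambda>z. indicator (- reset_set) z * g (recursion_map (w, z)))"
      by (rule integrable_nonreset[OF g gb])
  qed
  also have "(\<integral>z. indicator reset_set z * g 0 \<partial>law_YX) = g 0 * reset_prob"
    unfolding reset_prob_def using reset_set_in_sets by simp
  finally show ?thesis .
qed

lemma nonreset_integral_bounds:
  fixes g :: "real \<Rightarrow> real"
  assumes g: "g \<in> borel_measurable borel" and gb: "\<And>v. 0 \<le> g v" "\<And>v. g v \<le> Bd"
  shows "0 \<le> nonreset_integral g w" "nonreset_integral g w \<le> Bd * (1 - reset_prob)"
proof -
  show "0 \<le> nonreset_integral g w" unfolding nonreset_integral_def using gb by (intro integral_nonneg_AE AE_I2) (simp add: indicator_def)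
  have "nonreset_integral g w \<le> (\<integral>z. indicator (- reset_set) z * Bd \<partial>law_YX)"
    unfolding nonreset_integral_def
  proof (rule integral_mono)
    show "integrable law_YX (\<lambda>z. indicator (- reset_set) z * g (recursion_map (w, z)))"
      by (rule integrable_nonreset[OF g gb])
    show "integrable law_YX (\<lambda>z. indicator (- reset_set) z * Bd)"
      using integrable_real_mult_indicator[of "- reset_set" law_YX "\<lambda>_. Bd"] Compl_reset_set_in_sets by (simp add: mult.commute)
  qed (use gb in \<open>auto simp: indicator_def\<close>)
  also have "\<dots> = Bd * measure law_YX (- reset_set)" using Compl_reset_set_in_sets by simp
  also have "measure law_YX (- reset_set) = 1 - reset_prob"
    unfolding reset_prob_def using YX.prob_compl[OF reset_set_in_sets] by (simp add: Compl_eq_Diff_UNIV)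
  finally show "nonreset_integral g w \<le> Bd * (1 - reset_prob)" .
qed

lemma borel_measurable_nonreset_integral:
  fixes g :: "real \<Rightarrow> real"
  assumes g: "g \<in> borel_measurable borel"
  shows "nonreset_integral g \<in> borel_measurable borel"
proof -
  have "(\<lambda>(w, z). indicator (- reset_set) z * g (recursion_map (w, z))) \<in> borel_measurable (borel \<Otimes>\<^sub>M (borel \<Otimes>\<^sub>M borel))"
    using g reset_set_in_sets by (simp add: sets_law_YX) measurable
  then have "(\<lambda>(w, z). indicator (- reset_set) z * g (recursion_map (w, z))) \<in> borel_measurable (borel \<Otimes>\<^sub>M law_YX)"
    using measurable_cong_sets[OF sets_pair_measure_cong[OF refl sets_law_YX] refl] by blast
  then show ?thesis unfolding nonreset_integral_def[abs_def]
    by (rule YX.borel_measurable_lebesgue_integral)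
qed

lemma integral_step:
  fixes g :: "real \<Rightarrow> real"
  assumes r: "prob_space \<rho>" "sets \<rho> = sets borel"
    and g: "g \<in> borel_measurable borel" and gb: "\<And>v. 0 \<le> g v" "\<And>v. g v \<le> Bd"
  shows "(\<integral>v. g v \<partial>step \<rho>) = g 0 * reset_prob + (\<integral>w. nonreset_integral g w \<partial>\<rho>)"
proof -
  interpret R: prob_space \<rho> by fact
  interpret pq: pair_sigma_finite \<rho> law_YX
    by (intro pair_sigma_finite.intro prob_space_imp_sigma_finite r(1) prob_space_law_YX)
  interpret rq: prob_space "\<rho> \<Otimes>\<^sub>M law_YX" by (rule prob_space_pair[OF r(1) prob_space_law_YX])
  have mc: "borel_measurable \<rho> = borel_measurable borel" by (rule measurable_cong_sets[OF r(2) refl])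
  have "(\<integral>v. g v \<partial>step \<rho>) = (\<integral>z. g (recursion_map z) \<partial>(\<rho> \<Otimes>\<^sub>M law_YX))"
    unfolding step_def by (rule integral_distr[OF measurable_recursion_map'[OF r(2)] g])
  also have "\<dots> = (\<integral>w. \<integral>z. g (recursion_map (w, z)) \<partial>law_YX \<partial>\<rho>)"
  proof (rule pq.integral_fst'[symmetric])
    show "integrable (\<rho> \<Otimes>\<^sub>M law_YX) (\<lambda>z. g (recursion_map z))"
      by (rule rq.integrable_const_bound[where B=Bd])
         (use gb measurable_compose[OF measurable_recursion_map'[OF r(2)] g] in \<open>auto simp: abs_of_nonneg\<close>)
  qed
  also have "\<dots> = (\<integral>w. g 0 * reset_prob + nonreset_integral g w \<partial>\<rho>)"
    by (intro Bochner_Integration.integral_cong refl integral_recursion_map_split[OF g gb])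
  also have "\<dots> = g 0 * reset_prob + (\<integral>w. nonreset_integral g w \<partial>\<rho>)"
  proof -
    have "integrable \<rho> (nonreset_integral g)"
      by (rule R.integrable_const_bound[where B="Bd * (1 - reset_prob)"])
         (use nonreset_integral_bounds[OF g gb] borel_measurable_nonreset_integral[OF g] in \<open>auto simp: mc\<close>)
    then show ?thesis by (simp add: R.prob_space)
  qed
  finally show ?thesis .
qed

lemma step_contraction:
  fixes g :: "real \<Rightarrow> real"
  assumes r1: "prob_space \<rho>1" "sets \<rho>1 = sets borel" and r2: "prob_space \<rho>2" "sets \<rho>2 = sets borel"
    and IH: "\<And>Bb h. h \<in> borel_measurable borel \<Longrightarrow> (\<And>v. 0 \<le> h v) \<Longrightarrow> (\<And>v. h v \<le> Bb) \<Longrightarrow>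
              \<bar>(\<integral>v. h v \<partial>\<rho>1) - (\<integral>v. h v \<partial>\<rho>2)\<bar> \<le> Bb * c"
    and g: "g \<in> borel_measurable borel" and gb: "\<And>v. 0 \<le> g v" "\<And>v. g v \<le> Bd"
  shows "\<bar>(\<integral>v. g v \<partial>step \<rho>1) - (\<integral>v. g v \<partial>step \<rho>2)\<bar> \<le> Bd * (1 - reset_prob) * c"
proof -
  have "(\<integral>v. g v \<partial>step \<rho>1) - (\<integral>v. g v \<partial>step \<rho>2) = (\<integral>w. nonreset_integral g w \<partial>\<rho>1) - (\<integral>w. nonreset_integral g w \<partial>\<rho>2)"
    using integral_step[OF r1 g gb] integral_step[OF r2 g gb] by simp
  also have "\<bar>\<dots>\<bar> \<le> (Bd * (1 - reset_prob)) * c"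
    by (rule IH[OF borel_measurable_nonreset_integral[OF g]]) (use nonreset_integral_bounds[OF g gb] in auto)
  finally show ?thesis .
qed

definition law_iter :: "nat \<Rightarrow> real measure" where "law_iter n = (step ^^ n) (return borel 0)"

lemma prob_space_law_iter: "prob_space (law_iter n) \<and> sets (law_iter n) = sets borel"
proof (induction n)
  case 0 then show ?case unfolding law_iter_def by (auto intro: prob_space_return)
next
  case (Suc n) then show ?case unfolding law_iter_def using prob_space_step by simp
qed

lemma law_iter_Suc: "law_iter (Suc n) = step (law_iter n)" unfolding law_iter_def by simp

lemma integral_bounds:
  fixes h :: "real \<Rightarrow> real"
  assumes "prob_space \<rho>" "sets \<rho> = sets borel" "h \<in> borel_measurable borel" "\<And>v. 0 \<le> h v" "\<And>v. h v \<le> Bb"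
  shows "0 \<le> (\<integral>v. h v \<partial>\<rho>)" "(\<integral>v. h v \<partial>\<rho>) \<le> Bb"
proof -
  interpret R: prob_space \<rho> by fact
  have mc: "borel_measurable \<rho> = borel_measurable borel" by (rule measurable_cong_sets[OF assms(2) refl])
  show "0 \<le> (\<integral>v. h v \<partial>\<rho>)" using assms(4) by (intro integral_nonneg_AE AE_I2) auto
  have "integrable \<rho> h"
    by (rule R.integrable_const_bound[where B=Bb]) (use assms(3-5) in \<open>auto simp: mc abs_of_nonneg\<close>)
  then show "(\<integral>v. h v \<partial>\<rho>) \<le> Bb" using assms(5) by (intro R.integral_le_const AE_I2) auto
qed

lemma law_iter_integral_dist:
  fixes h :: "real \<Rightarrow> real"
  shows "h \<in> borel_measurable borel \<Longrightarrow> (\<And>v. 0 \<le> h v) \<Longrightarrow> (\<And>v. h v \<le> Bb) \<Longrightarrow>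
    \<bar>(\<integral>v. h v \<partial>law_iter n) - (\<integral>v. h v \<partial>law_W)\<bar> \<le> Bb * (1 - reset_prob) ^ n"
proof (induction n arbitrary: Bb h)
  case 0
  have "0 \<le> (\<integral>v. h v \<partial>law_iter 0)" "(\<integral>v. h v \<partial>law_iter 0) \<le> Bb"
    using integral_bounds[of "law_iter 0" h Bb] prob_space_law_iter 0 by auto
  moreover have "0 \<le> (\<integral>v. h v \<partial>law_W)" "(\<integral>v. h v \<partial>law_W) \<le> Bb"
    using integral_bounds[of law_W h Bb] prob_space_law_W 0 by auto
  ultimately show ?case by simp
next
  case (Suc n)
  have "\<bar>(\<integral>v. h v \<partial>step (law_iter n)) - (\<integral>v. h v \<partial>step law_W)\<bar> \<le> Bb * (1 - reset_prob) * (1 - reset_prob) ^ n"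
    by (rule step_contraction[OF _ _ prob_space_law_W sets_law_W Suc.IH Suc.prems]) (use prob_space_law_iter in auto)
  then show ?case unfolding law_iter_Suc step_law_W by (simp add: algebra_simps)
qed

lemma p_X_mgf_less_1: "p * X.mgf < 1" using p_mgf_less_1 X_mgf_eq by simp

lemma step_tail_le:
  assumes \<rho>: "prob_space \<rho>" "sets \<rho> = sets borel" and "0 \<le> x"
  shows "measure (step \<rho>) {w. x < max 0 w}
    \<le> p * measure (distr \<rho> borel (max 0) \<Otimes>\<^sub>M law_X) {(w, t). x < w + t} + (1 - p) * X.tail x"
proof -
  interpret R: prob_space \<rho> by fact
  have "(\<lambda>w::real. max 0 w) \<in> borel_measurable borel" by measurable
  then have max: "max 0 \<in> borel_measurable \<rho>"
    by (subst measurable_cong_sets[OF \<rho>(2) refl])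
  have "(\<integral>w. X.tail (x - max 0 w) \<partial>\<rho>) = (\<integral>w. X.tail (x - w) \<partial>distr \<rho> borel (max 0))"
    by (rule integral_distr[symmetric, OF max]) measurable
  also have "\<dots> = measure (distr \<rho> borel (max 0) \<Otimes>\<^sub>M law_X) {(w, t). x < w + t}"
    by (rule X.measure_sum_gt_eq_integral_tail[symmetric, OF R.prob_space_distr[OF max]]) simp
  finally have sum: "(\<integral>w. X.tail (x - max 0 w) \<partial>\<rho>) = measure (distr \<rho> borel (max 0) \<Otimes>\<^sub>M law_X) {(w, t). x < w + t}" .
  have mc: "borel_measurable \<rho> = borel_measurable borel" by (rule measurable_cong_sets[OF \<rho>(2) refl])
  have "(\<integral>w. X.tail (x + max 0 w) \<partial>\<rho>) \<le> X.tail x"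
  proof (rule R.integral_le_const)
    show "integrable \<rho> (\<lambda>w. X.tail (x + max 0 w))"
      by (rule R.integrable_const_bound[where B=1]) (auto simp: mc X.tail_nonneg X.tail_le_1)
  qed (intro AE_I2 X.tail_antimono; simp)
  with sum show ?thesis
    unfolding step_tail[OF assms] using p_less_1 by (simp add: mult_left_mono)
qed

lemma step_preserves_tail_bound:
  assumes \<rho>: "prob_space \<rho>" "sets \<rho> = sets borel"
    and bound: "\<And>s. measure \<rho> {w. s < max 0 w} \<le> \<alpha> * X.tail s"
    and kesten: "\<And>\<rho>'. prob_space \<rho>' \<Longrightarrow> sets \<rho>' = sets borel \<Longrightarrow> (\<And>s. measure \<rho>' {s<..} \<le> \<alpha> * X.tail s) \<Longrightarrow>
       measure (\<rho>' \<Otimes>\<^sub>M law_X) {(w, t). x < w + t} \<le> (\<theta> * \<alpha> + K) * X.tail x"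
    and \<alpha>: "p * K + (1 - p) \<le> \<alpha> * (1 - p * \<theta>)" and "0 \<le> x"
  shows "measure (step \<rho>) {w. x < max 0 w} \<le> \<alpha> * X.tail x"
proof -
  interpret R: prob_space \<rho> by fact
  have "(\<lambda>w::real. max 0 w) \<in> borel_measurable borel" by measurable
  then have max: "max 0 \<in> borel_measurable \<rho>"
    by (subst measurable_cong_sets[OF \<rho>(2) refl])
  have "measure (distr \<rho> borel (max 0) \<Otimes>\<^sub>M law_X) {(w, t). x < w + t} \<le> (\<theta> * \<alpha> + K) * X.tail x"
  proof (rule kesten)
    show "prob_space (distr \<rho> borel (max 0))" by (rule R.prob_space_distr[OF max])
    show "measure (distr \<rho> borel (max 0)) {s<..} \<le> \<alpha> * X.tail s" for s
      using bound[of s] \<rho>(2) by (subst measure_distr[OF max]) (auto simp: vimage_def sets_eq_imp_space_eq)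
  qed simp
  then have "measure (step \<rho>) {w. x < max 0 w} \<le> p * ((\<theta> * \<alpha> + K) * X.tail x) + (1 - p) * X.tail x"
    using step_tail_le[OF \<rho> \<open>0 \<le> x\<close>] p_nonneg by (smt (verit) mult_left_mono)
  also have "\<dots> = (p * \<theta> * \<alpha> + (p * K + (1 - p))) * X.tail x" by (simp add: algebra_simps)
  also have "\<dots> \<le> (p * \<theta> * \<alpha> + \<alpha> * (1 - p * \<theta>)) * X.tail x"
    using \<alpha> X.tail_nonneg by (intro mult_right_mono) auto
  finally show ?thesis by (simp add: algebra_simps)
qed

lemma law_iter_tail_bound:
  obtains \<alpha> where "0 \<le> \<alpha>" "\<And>n s. measure (law_iter n) {w. s < max 0 w} \<le> \<alpha> * X.tail s"
proof -
  obtain \<theta> K x0 where \<theta>: "0 \<le> \<theta>" "p * \<theta> < 1" "0 \<le> K" "0 \<le> x0"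
    and kesten: "\<And>\<rho> \<alpha> x. prob_space \<rho> \<Longrightarrow> sets \<rho> = sets borel \<Longrightarrow> 0 \<le> \<alpha> \<Longrightarrow>
       (\<And>s. measure \<rho> {s<..} \<le> \<alpha> * X.tail s) \<Longrightarrow> x0 \<le> x \<Longrightarrow>
       measure (\<rho> \<Otimes>\<^sub>M law_X) {(w, t). x < w + t} \<le> (\<theta> * \<alpha> + K) * X.tail x"
    using X.kesten_bound[OF p_X_mgf_less_1] by blast
  define \<alpha> where "\<alpha> = max (1 / X.tail x0) ((p * K + (1 - p)) / (1 - p * \<theta>))"
  have \<alpha>0: "0 \<le> \<alpha>" unfolding \<alpha>_def using X.tail_pos[of x0] by (simp add: le_max_iff_disj)
  have "(p * K + (1 - p)) / (1 - p * \<theta>) \<le> \<alpha>" unfolding \<alpha>_def by simp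
  then have \<alpha>K: "p * K + (1 - p) \<le> \<alpha> * (1 - p * \<theta>)"
    using \<theta>(2) by (simp add: pos_divide_le_eq)
  have "1 / X.tail x0 \<le> \<alpha>" unfolding \<alpha>_def by simp
  then have \<alpha>1: "1 \<le> \<alpha> * X.tail x0"
    using X.tail_pos[of x0] by (simp add: pos_divide_le_eq)
  have small: "measure \<rho> S \<le> \<alpha> * X.tail s" if "prob_space \<rho>" "s < x0" for \<rho> S s
  proof -
    have "measure \<rho> S \<le> 1" using that(1) by (simp add: prob_space.prob_le_1)
    also have "1 \<le> \<alpha> * X.tail x0" by (rule \<alpha>1)
    also have "\<dots> \<le> \<alpha> * X.tail s" using that(2) \<alpha>0 by (intro mult_left_mono X.tail_antimono) auto
    finally show ?thesis .
  qed
  have "measure (law_iter n) {w. s < max 0 w} \<le> \<alpha> * X.tail s" for n s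
  proof (induction n arbitrary: s)
    case 0
    show ?case
    proof (cases "s < x0")
      case False
      have "{w::real. s < max 0 w} \<in> sets borel" by measurable
      then have "measure (law_iter 0) {w. s < max 0 w} = 0"
        using False \<theta>(4) by (simp add: law_iter_def measure_return)
      then show ?thesis using \<alpha>0 X.tail_nonneg[of s] by simp
    qed (use small prob_space_law_iter in blast)
  next
    case (Suc n)
    have "measure (step (law_iter n)) {w. s < max 0 w} \<le> \<alpha> * X.tail s" if "x0 \<le> s"
      using prob_space_law_iter[of n] that \<theta>(4)
      by (intro step_preserves_tail_bound[OF _ _ Suc.IH kesten \<alpha>K]) (auto simp: \<alpha>0)
    then show ?case
      using small[of "law_iter (Suc n)"] prob_space_law_iter[of "Suc n"] by (cases "s < x0") (auto simp: law_iter_Suc)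
  qed
  with \<alpha>0 show ?thesis by (rule that)
qed

lemma law_W_tail_bound:
  obtains \<alpha> where "0 \<le> \<alpha>" "\<And>s. measure law_W {s<..} \<le> \<alpha> * X.tail s"
proof -
  obtain \<alpha> where a0: "0 \<le> \<alpha>" and b: "\<And>n s. measure (law_iter n) {w. s < max 0 w} \<le> \<alpha> * X.tail s"
    using law_iter_tail_bound by blast
  have "measure law_W {s<..} \<le> \<alpha> * X.tail s" for s
  proof -
    define S where "S = {w::real. s < max 0 w}"
    have mS: "S \<in> sets borel" unfolding S_def by measurable
    have "measure law_W S \<le> \<alpha> * X.tail s + (1 - reset_prob) ^ n" for n
    proof -
      have "\<bar>(\<integral>v. indicator S v \<partial>law_iter n) - (\<integral>v. indicator S v \<partial>law_W)\<bar> \<le> 1 * (1 - reset_prob) ^ n"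
        by (rule law_iter_integral_dist) (use mS in auto)
      moreover have "(\<integral>v. indicator S v \<partial>law_iter n) = measure (law_iter n) S"
        using prob_space_law_iter[of n] sets_eq_imp_space_eq[of "law_iter n" borel] by simp
      moreover have "(\<integral>v. indicator S v \<partial>law_W) = measure law_W S" by simp
      ultimately show ?thesis using b[of n s] unfolding S_def by simp
    qed
    moreover have "(\<lambda>n. \<alpha> * X.tail s + (1 - reset_prob) ^ n) \<longlonglongrightarrow> \<alpha> * X.tail s + 0"
      using reset_prob_pos reset_prob_le_1 by (intro tendsto_add tendsto_const LIMSEQ_power_zero) auto
    ultimately have "measure law_W S \<le> \<alpha> * X.tail s"
      by (intro LIMSEQ_le_const[where X="\<lambda>n. \<alpha> * X.tail s + (1 - reset_prob) ^ n"]) auto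
    moreover have "measure law_W {s<..} \<le> measure law_W S"
    proof -
      interpret nn: prob_space law_W by (rule prob_space_law_W)
      show ?thesis unfolding S_def by (intro nn.finite_measure_mono) auto
    qed
    ultimately show ?thesis by simp
  qed
  then show ?thesis using that a0 by blast
qed

lemma law_W_tail_eq:
  assumes x: "0 \<le> x"
  shows "measure law_W {x<..} = p * measure (law_W \<Otimes>\<^sub>M law_X) {(w,t). x < w + t} + (1 - p) * (\<integral>w. X.tail (x + w) \<partial>law_W)"
proof -
  have mc: "borel_measurable law_W = borel_measurable borel" by (rule measurable_cong_sets[OF sets_law_W refl])
  have "measure law_W {x<..} = measure law_W {w. x < max 0 w}"
    using x by (intro arg_cong[where f="measure law_W"]) auto
  also have "\<dots> = p * (\<integral>w. X.tail (x - max 0 w) \<partial>law_W) + (1 - p) * (\<integral>w. X.tail (x + max 0 w) \<partial>law_W)"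
    using step_tail[OF prob_space_law_W sets_law_W x] unfolding step_law_W .
  also have "(\<integral>w. X.tail (x - max 0 w) \<partial>law_W) = (\<integral>w. X.tail (x - w) \<partial>law_W)"
    by (intro integral_cong_AE) (use AE_law_W_nonneg in \<open>auto simp: mc elim!: eventually_mono\<close>)
  also have "\<dots> = measure (law_W \<Otimes>\<^sub>M law_X) {(w,t). x < w + t}"
    by (rule X.measure_sum_gt_eq_integral_tail[symmetric, OF prob_space_law_W sets_law_W])
  also have "(\<integral>w. X.tail (x + max 0 w) \<partial>law_W) = (\<integral>w. X.tail (x + w) \<partial>law_W)"
    by (intro integral_cong_AE) (use AE_law_W_nonneg in \<open>auto simp: mc elim!: eventually_mono\<close>)
  finally show ?thesis .
qed

lemma tail_equation_law_W: obtains \<alpha> where "tail_equation law_X \<gamma> law_W p \<alpha>"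
proof -
  obtain \<alpha> where "0 \<le> \<alpha>" and bound: "\<And>s. measure law_W {s<..} \<le> \<alpha> * X.tail s"
    using law_W_tail_bound by blast
  have "tail_equation law_X \<gamma> law_W p \<alpha>"
  proof (intro tail_equation.intro tail_equation_axioms.intro)
    show "class_S_law law_X \<gamma>" by (rule X.class_S_law_axioms)
    show "p * X.mgf < 1" by (rule p_X_mgf_less_1)
  qed (use prob_space_law_W AE_law_W_nonneg p_nonneg p_less_1 bound law_W_tail_eq in auto)
  then show ?thesis by (rule that)
qed

lemma tendsto_law_W_ratio:
  "((\<lambda>x. measure law_W {x<..} / X.tail x) \<longlongrightarrow>
     (p * (\<integral>w. exp (\<gamma> * w) \<partial>law_W) + (1 - p) * (\<integral>w. exp (- \<gamma> * w) \<partial>law_W)) / (1 - p * X.mgf)) at_top"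
proof -
  obtain \<alpha> where "tail_equation law_X \<gamma> law_W p \<alpha>" by (rule tail_equation_law_W)
  then interpret T: tail_equation law_X \<gamma> law_W p \<alpha> .
  show ?thesis
    using T.tendsto_ratio unfolding T.ratio_def T.tail_rho_def T.tail_constant_def T.mgf_rho_def T.laplace_rho_def .
qed

lemma integrable_exp_law_W: "0 < p \<Longrightarrow> integrable law_W (\<lambda>w. exp (\<gamma> * w))"
proof -
  obtain \<alpha> where "tail_equation law_X \<gamma> law_W p \<alpha>" by (rule tail_equation_law_W)
  then interpret T: tail_equation law_X \<gamma> law_W p \<alpha> .
  show "0 < p \<Longrightarrow> integrable law_W (\<lambda>w. exp (\<gamma> * w))" by (rule T.integrable_exp_rho)
qed


section \<open>The exponential moment of the stationary law\<close>

text \<open>\<open>exp_cdf_neg z = P(E \<le> -z)\<close>. It is the correction in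
  \<open>exp (\<gamma> * max 0 z) = exp (\<gamma> * z) + exp_cdf_neg z\<close>, which turns the exponential moment of
  the positive part of \<open>Z\<close> into \<open>E[exp (\<gamma> Z)] + P(Z + E \<le> 0)\<close>.\<close>

definition exp_cdf_neg :: "real \<Rightarrow> real" where
  "exp_cdf_neg z = (1 - exp (\<gamma> * z)) * indicator {..0} z"

lemma borel_measurable_exp_cdf_neg[measurable]: "exp_cdf_neg \<in> borel_measurable borel"
  unfolding exp_cdf_neg_def by measurable

lemma exp_cdf_neg_bounds: "0 \<le> exp_cdf_neg z" "exp_cdf_neg z \<le> 1"
  unfolding exp_cdf_neg_def using gamma_pos by (auto simp: indicator_def mult_nonneg_nonpos)

lemma exp_max_0: "exp (\<gamma> * max 0 z) = exp (\<gamma> * z) + exp_cdf_neg z"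
  unfolding exp_cdf_neg_def by (auto simp: indicator_def max_def)

lemma measure_E_le: "measure M {\<omega> \<in> space M. E \<omega> \<le> c} = (if 0 \<le> c then 1 - exp (- c * \<gamma>) else 0)"
proof (cases "0 \<le> c")
  case True
  then show ?thesis using P.exponential_distributedD_le[OF exponential_E True gamma_pos] by simp
next
  case False
  have "measure M {\<omega> \<in> space M. E \<omega> \<le> c} \<le> measure M {\<omega> \<in> space M. E \<omega> \<le> 0}"
    using False measurable_XYWE by (intro P.finite_measure_mono) auto
  also have "\<dots> = 0" using P.exponential_distributedD_le[OF exponential_E order_refl gamma_pos] by simp
  finally show ?thesis using False by (simp add: measure_nonneg antisym)
qed

lemma measure_add_E_le_0:
  assumes Z: "Z \<in> borel_measurable M" and ind: "P.indep_var borel Z borel E"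
  shows "measure M {\<omega> \<in> space M. Z \<omega> + E \<omega> \<le> 0} = (\<integral>\<omega>. exp_cdf_neg (Z \<omega>) \<partial>M)"
proof -
  define lZ where "lZ = distr M borel Z"
  define lE where "lE = distr M borel E"
  have pZ: "prob_space lZ" unfolding lZ_def using Z by (rule P.prob_space_distr)
  have pE: "prob_space lE" unfolding lE_def using measurable_XYWE by (intro P.prob_space_distr) auto
  have joint: "lZ \<Otimes>\<^sub>M lE = distr M (borel \<Otimes>\<^sub>M borel) (\<lambda>\<omega>. (Z \<omega>, E \<omega>))"
    using P.indep_var_distribution_eq[THEN iffD1, OF ind] unfolding lZ_def lE_def by simp
  define S where "S = {ze::real\<times>real. fst ze + snd ze \<le> 0}"
  have mS: "S \<in> sets (borel \<Otimes>\<^sub>M borel)" "S \<in> sets (lZ \<Otimes>\<^sub>M lE)"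
    unfolding S_def by (rule Collect_in_sets_pair_borel; simp add: lZ_def lE_def)+
  have "measure M {\<omega> \<in> space M. Z \<omega> + E \<omega> \<le> 0} = measure (distr M (borel \<Otimes>\<^sub>M borel) (\<lambda>\<omega>. (Z \<omega>, E \<omega>))) S"
    using Z measurable_XYWE mS(1) by (subst measure_distr) (auto simp: S_def vimage_def Int_def conj_commute intro!: arg_cong[where f="measure M"])
  also have "\<dots> = measure (lZ \<Otimes>\<^sub>M lE) S" unfolding joint ..
  also have "\<dots> = (\<integral>z. measure lE (Pair z -` S) \<partial>lZ)"
    by (rule measure_pair_measure_eq_integral_Pair(1)[OF pZ pE mS(2)])
  also have "\<dots> = (\<integral>z. exp_cdf_neg z \<partial>lZ)"
  proof (intro Bochner_Integration.integral_cong refl)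
    fix z
    have "measure lE (Pair z -` S) = measure M {\<omega> \<in> space M. E \<omega> \<le> - z}"
      unfolding lE_def S_def using measurable_XYWE by (subst measure_distr) (auto simp: vimage_def Int_def conj_commute intro!: arg_cong[where f="measure M"])
    also have "\<dots> = exp_cdf_neg z" unfolding measure_E_le exp_cdf_neg_def by (simp add: indicator_def algebra_simps)
    finally show "measure lE (Pair z -` S) = exp_cdf_neg z" .
  qed
  also have "\<dots> = (\<integral>\<omega>. exp_cdf_neg (Z \<omega>) \<partial>M)" unfolding lZ_def by (rule integral_distr[OF Z borel_measurable_exp_cdf_neg])
  finally show ?thesis .
qed

lemma AE_Y_pm1: "AE \<omega> in M. Y \<omega> = 1 \<or> Y \<omega> = -1"
proof -
  have "measure M {\<omega> \<in> space M. Y \<omega> = 1 \<or> Y \<omega> = -1}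
      = measure M ({\<omega> \<in> space M. Y \<omega> = 1} \<union> {\<omega> \<in> space M. Y \<omega> = -1})"
    by (intro arg_cong[where f="measure M"]) auto
  also have "\<dots> = 1"
    by (subst P.finite_measure_Union) (auto simp: Y_1 Y_minus_1)
  moreover have "{\<omega> \<in> space M. Y \<omega> = 1 \<or> Y \<omega> = -1} \<in> sets M" by measurable
  ultimately show ?thesis by (simp add: P.prob_eq_1)
qed

lemma integral_indicator_Y_mult:
  fixes h :: "real \<Rightarrow> real \<Rightarrow> real"
  assumes hm: "(\<lambda>z. h (fst z) (snd z)) \<in> borel_measurable (borel \<Otimes>\<^sub>M borel)"
    and hi: "integrable M (\<lambda>\<omega>. h (W \<omega>) (X \<omega>))"
  shows "(\<integral>\<omega>. indicator {c} (Y \<omega>) * h (W \<omega>) (X \<omega>) \<partial>M)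
    = measure M {\<omega> \<in> space M. Y \<omega> = c} * (\<integral>\<omega>. h (W \<omega>) (X \<omega>) \<partial>M)"
proof -
  have "(\<lambda>u. (u 2, u 0)) \<in> measurable (PiM {2::nat, 0} (\<lambda>_. borel)) (borel \<Otimes>\<^sub>M borel)"
    by (intro measurable_Pair measurable_component_singleton) auto
  from measurable_compose[OF this hm]
  have g: "(\<lambda>u::nat\<Rightarrow>real. h (u 2) (u 0)) \<in> borel_measurable (PiM {2::nat, 0} (\<lambda>_. borel))"
    by simp
  have f: "(\<lambda>u::nat\<Rightarrow>real. indicator {c} (u 1) :: real) \<in> borel_measurable (PiM {1::nat} (\<lambda>_. borel))"
    by (intro borel_measurable_indicator' measurable_component_singleton) auto
  have "P.indep_var borel (\<lambda>\<omega>. indicator {c} (Y \<omega>) :: real) borel (\<lambda>\<omega>. h (W \<omega>) (X \<omega>))"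
    using indep_var_coords[OF _ _ _ f g] by (simp add: coords_apply)
  moreover have "integrable M (\<lambda>\<omega>. indicator {c} (Y \<omega>) :: real)"
    by (rule P.integrable_const_bound[where B=1]) (auto simp: indicator_def)
  ultimately have "(\<integral>\<omega>. indicator {c} (Y \<omega>) * h (W \<omega>) (X \<omega>) \<partial>M)
      = (\<integral>\<omega>. indicator {c} (Y \<omega>) \<partial>M) * (\<integral>\<omega>. h (W \<omega>) (X \<omega>) \<partial>M)"
    using hi by (rule P.indep_var_lebesgue_integral)
  moreover have "(\<integral>\<omega>. (indicator {c} (Y \<omega>) :: real) \<partial>M) = (\<integral>\<omega>. indicator {\<omega> \<in> space M. Y \<omega> = c} \<omega> \<partial>M)"
    by (intro Bochner_Integration.integral_cong refl) (auto simp: indicator_def)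
  ultimately show ?thesis by (simp add: Int_absorb2)
qed

lemma integral_law_W:
  fixes f :: "real \<Rightarrow> real"
  assumes "f \<in> borel_measurable borel"
  shows "(\<integral>w. f w \<partial>law_W) = (\<integral>\<omega>. f (W \<omega>) \<partial>M)"
  unfolding law_W_def by (rule integral_distr[of W M borel f]) (simp_all add: assms)

lemma tail_W_eq: "measure law_W {x<..} = measure M {\<omega> \<in> space M. W \<omega> > x}"
  unfolding law_W_def by (subst measure_distr) (auto simp: vimage_def Int_def conj_commute)

lemma integrable_exp_X: "integrable M (\<lambda>\<omega>. exp (\<gamma> * X \<omega>))"
  using X.integrable_exp unfolding law_X_def by (subst (asm) integrable_distr_eq) auto

lemma integrable_exp_W: "0 < p \<Longrightarrow> integrable M (\<lambda>\<omega>. exp (\<gamma> * W \<omega>))"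
  using integrable_exp_law_W unfolding law_W_def by (subst (asm) integrable_distr_eq) auto

lemma integrable_exp_neg_W: "integrable M (\<lambda>\<omega>. exp (- \<gamma> * W \<omega>))"
proof (rule P.integrable_const_bound[where B=1])
  show "AE \<omega> in M. norm (exp (- \<gamma> * W \<omega>)) \<le> 1"
    using AE_W_nonneg by eventually_elim (use gamma_pos in simp)
qed simp

lemma laplace_W_pos: "0 < (\<integral>\<omega>. exp (- \<gamma> * W \<omega>) \<partial>M)"
proof -
  have "(\<integral>\<omega>. exp (- \<gamma> * W \<omega>) \<partial>M) \<noteq> 0"
  proof
    assume "(\<integral>\<omega>. exp (- \<gamma> * W \<omega>) \<partial>M) = 0"
    then have "AE \<omega> in M. exp (- \<gamma> * W \<omega>) = 0"
      using integral_nonneg_eq_0_iff_AE[OF integrable_exp_neg_W] by simp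
    then show False using P.AE_False by simp
  qed
  moreover have "0 \<le> (\<integral>\<omega>. exp (- \<gamma> * W \<omega>) \<partial>M)" by simp
  ultimately show ?thesis by (metis less_le)
qed

lemma indep_var_X_W:
  fixes f g :: "real \<Rightarrow> real"
  assumes "f \<in> borel_measurable borel" "g \<in> borel_measurable borel"
  shows "P.indep_var borel (\<lambda>\<omega>. f (X \<omega>)) borel (\<lambda>\<omega>. g (W \<omega>))"
proof -
  have "(\<lambda>u::nat\<Rightarrow>real. f (u 0)) \<in> borel_measurable (PiM {0} (\<lambda>_. borel))"
    "(\<lambda>u::nat\<Rightarrow>real. g (u 2)) \<in> borel_measurable (PiM {2} (\<lambda>_. borel))"
    using assms by measurable
  from indep_var_coords[OF _ _ _ this] show ?thesis by (simp add: coords_apply)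
qed

lemma indep_var_X_W_E: "P.indep_var borel (\<lambda>\<omega>. X \<omega> + s * W \<omega>) borel E"
proof -
  have "(\<lambda>u::nat\<Rightarrow>real. u 0 + s * u 2) \<in> borel_measurable (PiM {0, 2} (\<lambda>_. borel))"
    "(\<lambda>u::nat\<Rightarrow>real. u 3) \<in> borel_measurable (PiM {3} (\<lambda>_. borel))"
    by measurable
  from indep_var_coords[OF _ _ _ this] show ?thesis by (simp add: coords_apply)
qed

lemma integral_exp_max_0:
  assumes "integrable M (\<lambda>\<omega>. exp (\<gamma> * (s * W \<omega>)))"
  shows "(\<integral>\<omega>. exp (\<gamma> * max 0 (X \<omega> + s * W \<omega>)) \<partial>M) =
        (\<integral>\<omega>. exp (\<gamma> * X \<omega>) \<partial>M) * (\<integral>\<omega>. exp (\<gamma> * (s * W \<omega>)) \<partial>M)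
        + measure M {\<omega> \<in> space M. X \<omega> + s * W \<omega> + E \<omega> \<le> 0}"
    and "integrable M (\<lambda>\<omega>. exp (\<gamma> * max 0 (X \<omega> + s * W \<omega>)))"
proof -
  have indep: "P.indep_var borel (\<lambda>\<omega>. exp (\<gamma> * X \<omega>)) borel (\<lambda>\<omega>. exp (\<gamma> * (s * W \<omega>)))"
    by (rule indep_var_X_W[of "\<lambda>x. exp (\<gamma> * x)" "\<lambda>w. exp (\<gamma> * (s * w))"]) simp_all
  have split: "exp (\<gamma> * max 0 (X \<omega> + s * W \<omega>))
      = exp (\<gamma> * X \<omega>) * exp (\<gamma> * (s * W \<omega>)) + exp_cdf_neg (X \<omega> + s * W \<omega>)" for \<omega>
    unfolding exp_max_0 by (simp add: exp_add[symmetric] algebra_simps)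
  have i1: "integrable M (\<lambda>\<omega>. exp (\<gamma> * X \<omega>) * exp (\<gamma> * (s * W \<omega>)))"
    by (rule P.indep_var_integrable[OF indep integrable_exp_X assms])
  have i2: "integrable M (\<lambda>\<omega>. exp_cdf_neg (X \<omega> + s * W \<omega>))"
    by (rule P.integrable_const_bound[where B=1]) (use exp_cdf_neg_bounds in \<open>auto simp: abs_of_nonneg\<close>)
  show "integrable M (\<lambda>\<omega>. exp (\<gamma> * max 0 (X \<omega> + s * W \<omega>)))"
    unfolding split using i1 i2 by simp
  have "(\<integral>\<omega>. exp (\<gamma> * max 0 (X \<omega> + s * W \<omega>)) \<partial>M) =
      (\<integral>\<omega>. exp (\<gamma> * X \<omega>) * exp (\<gamma> * (s * W \<omega>)) \<partial>M) + (\<integral>\<omega>. exp_cdf_neg (X \<omega> + s * W \<omega>) \<partial>M)"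
    unfolding split using i1 i2 by simp
  also have "(\<integral>\<omega>. exp (\<gamma> * X \<omega>) * exp (\<gamma> * (s * W \<omega>)) \<partial>M)
      = (\<integral>\<omega>. exp (\<gamma> * X \<omega>) \<partial>M) * (\<integral>\<omega>. exp (\<gamma> * (s * W \<omega>)) \<partial>M)"
    by (rule P.indep_var_lebesgue_integral[OF indep integrable_exp_X assms])
  also have "(\<integral>\<omega>. exp_cdf_neg (X \<omega> + s * W \<omega>) \<partial>M) = measure M {\<omega> \<in> space M. X \<omega> + s * W \<omega> + E \<omega> \<le> 0}"
    by (rule measure_add_E_le_0[symmetric, OF _ indep_var_X_W_E]) simp
  finally show "(\<integral>\<omega>. exp (\<gamma> * max 0 (X \<omega> + s * W \<omega>)) \<partial>M) =
      (\<integral>\<omega>. exp (\<gamma> * X \<omega>) \<partial>M) * (\<integral>\<omega>. exp (\<gamma> * (s * W \<omega>)) \<partial>M)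
      + measure M {\<omega> \<in> space M. X \<omega> + s * W \<omega> + E \<omega> \<le> 0}" .
qed

lemma integral_exp_W_split:
  assumes i1: "integrable M (\<lambda>\<omega>. exp (\<gamma> * max 0 (X \<omega> + W \<omega>)))"
    and i2: "integrable M (\<lambda>\<omega>. exp (\<gamma> * max 0 (X \<omega> - W \<omega>)))"
  shows "(\<integral>\<omega>. exp (\<gamma> * W \<omega>) \<partial>M) = p * (\<integral>\<omega>. exp (\<gamma> * max 0 (X \<omega> + W \<omega>)) \<partial>M)
    + (1 - p) * (\<integral>\<omega>. exp (\<gamma> * max 0 (X \<omega> - W \<omega>)) \<partial>M)"
proof -
  have plus: "(\<lambda>z. exp (\<gamma> * max 0 (snd z + fst z))) \<in> borel_measurable (borel \<Otimes>\<^sub>M borel)"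
    by measurable
  have minus: "(\<lambda>z. exp (\<gamma> * max 0 (snd z - fst z))) \<in> borel_measurable (borel \<Otimes>\<^sub>M borel)"
    by measurable
  have "(\<integral>\<omega>. exp (\<gamma> * W \<omega>) \<partial>M) = (\<integral>w. exp (\<gamma> * w) \<partial>distr M borel W)"
    by (rule integral_distr[symmetric]) measurable
  also have "\<dots> = (\<integral>\<omega>. exp (\<gamma> * max 0 (Y \<omega> * W \<omega> + X \<omega>)) \<partial>M)"
    unfolding stationary[symmetric] by (rule integral_distr) measurable
  also have "\<dots> = (\<integral>\<omega>. indicator {1} (Y \<omega>) * exp (\<gamma> * max 0 (X \<omega> + W \<omega>))
      + indicator {-1} (Y \<omega>) * exp (\<gamma> * max 0 (X \<omega> - W \<omega>)) \<partial>M)"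
  proof (rule integral_cong_AE)
    show "AE \<omega> in M. exp (\<gamma> * max 0 (Y \<omega> * W \<omega> + X \<omega>)) = indicator {1} (Y \<omega>) * exp (\<gamma> * max 0 (X \<omega> + W \<omega>))
        + indicator {-1} (Y \<omega>) * exp (\<gamma> * max 0 (X \<omega> - W \<omega>))"
      using AE_Y_pm1 by eventually_elim (auto simp: indicator_def algebra_simps)
  qed measurable
  also have "\<dots> = (\<integral>\<omega>. indicator {1} (Y \<omega>) * exp (\<gamma> * max 0 (X \<omega> + W \<omega>)) \<partial>M)
      + (\<integral>\<omega>. indicator {-1} (Y \<omega>) * exp (\<gamma> * max 0 (X \<omega> - W \<omega>)) \<partial>M)"
  proof (rule Bochner_Integration.integral_add)
    show "integrable M (\<lambda>\<omega>. indicator {1} (Y \<omega>) * exp (\<gamma> * max 0 (X \<omega> + W \<omega>)))"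
      by (rule Bochner_Integration.integrable_bound[OF i1]) (auto simp: indicator_def)
    show "integrable M (\<lambda>\<omega>. indicator {-1} (Y \<omega>) * exp (\<gamma> * max 0 (X \<omega> - W \<omega>)))"
      by (rule Bochner_Integration.integrable_bound[OF i2]) (auto simp: indicator_def)
  qed
  also have "(\<integral>\<omega>. indicator {1} (Y \<omega>) * exp (\<gamma> * max 0 (X \<omega> + W \<omega>)) \<partial>M) =
      p * (\<integral>\<omega>. exp (\<gamma> * max 0 (X \<omega> + W \<omega>)) \<partial>M)"
    using integral_indicator_Y_mult[OF plus, of 1] i1 Y_1 by simp
  also have "(\<integral>\<omega>. indicator {-1} (Y \<omega>) * exp (\<gamma> * max 0 (X \<omega> - W \<omega>)) \<partial>M) =
      (1 - p) * (\<integral>\<omega>. exp (\<gamma> * max 0 (X \<omega> - W \<omega>)) \<partial>M)"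
    using integral_indicator_Y_mult[OF minus, of "-1"] i2 Y_minus_1 by simp
  finally show ?thesis .
qed

text \<open>Multiplied by \<open>p\<close> so that it also holds for \<open>p = 0\<close>, where \<open>E[exp (\<gamma> W)]\<close> may be infinite.\<close>

lemma exp_moment_W_eq:
  "p * (\<integral>\<omega>. exp (\<gamma> * W \<omega>) \<partial>M) =
    p * (p * ((\<integral>\<omega>. exp (\<gamma> * X \<omega>) \<partial>M) * (\<integral>\<omega>. exp (\<gamma> * W \<omega>) \<partial>M)
               + measure M {\<omega> \<in> space M. X \<omega> + W \<omega> + E \<omega> \<le> 0})
      + (1 - p) * ((\<integral>\<omega>. exp (\<gamma> * X \<omega>) \<partial>M) * (\<integral>\<omega>. exp (- \<gamma> * W \<omega>) \<partial>M)
               + measure M {\<omega> \<in> space M. X \<omega> - W \<omega> + E \<omega> \<le> 0}))"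
proof (cases "p = 0")
  case False
  with p_nonneg have "integrable M (\<lambda>\<omega>. exp (\<gamma> * (1 * W \<omega>)))"
    using integrable_exp_W by simp
  note plus = integral_exp_max_0[of 1, OF this]
  have "integrable M (\<lambda>\<omega>. exp (\<gamma> * (-1 * W \<omega>)))"
    using integrable_exp_neg_W by simp
  note minus = integral_exp_max_0[of "-1", OF this]
  show ?thesis
    using integral_exp_W_split plus minus by simp
qed simp

theorem W_tail_asymp:
  "(\<lambda>x. measure M {\<omega> \<in> space M. W \<omega> > x})
     \<sim>[at_top] (\<lambda>x. ((1 - p) * p / (1 - p * (\<integral>\<omega>. exp (\<gamma> * X \<omega>) \<partial>M))^2
              * (measure M {\<omega> \<in> space M. X \<omega> - W \<omega> + E \<omega> \<le> 0}
                 + p / (1 - p) * measure M {\<omega> \<in> space M. X \<omega> + W \<omega> + E \<omega> \<le> 0})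
            + (1 - p) / (1 - p * (\<integral>\<omega>. exp (\<gamma> * X \<omega>) \<partial>M))^2
              * (\<integral>\<omega>. exp (- \<gamma> * W \<omega>) \<partial>M))
           * measure M {\<omega> \<in> space M. X \<omega> > x})"
proof -
  let ?a = "\<integral>\<omega>. exp (\<gamma> * W \<omega>) \<partial>M" and ?b = "\<integral>\<omega>. exp (- \<gamma> * W \<omega>) \<partial>M"
    and ?\<phi> = "\<integral>\<omega>. exp (\<gamma> * X \<omega>) \<partial>M"
  have "(\<integral>w. exp (\<gamma> * w) \<partial>law_W) = ?a" "(\<integral>w. exp (- \<gamma> * w) \<partial>law_W) = ?b"
    by (simp_all add: integral_law_W)
  then have lim: "((\<lambda>x. measure M {\<omega> \<in> space M. W \<omega> > x} / measure M {\<omega> \<in> space M. X \<omega> > x})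
      \<longlongrightarrow> (p * ?a + (1 - p) * ?b) / (1 - p * ?\<phi>)) at_top"
    using tendsto_law_W_ratio unfolding tail_W_eq tail_X_eq X_mgf_eq by simp
  have pos: "0 < (p * ?a + (1 - p) * ?b) / (1 - p * ?\<phi>)"
    using laplace_W_pos p_nonneg p_less_1 p_mgf_less_1
    by (intro divide_pos_pos add_nonneg_pos mult_nonneg_nonneg mult_pos_pos) auto
  show ?thesis
    unfolding tail_constant_eq[OF p_less_1 p_mgf_less_1 exp_moment_W_eq]
    by (rule asymp_equivI'_const[OF lim]) (use pos in linarith)
qed

end

theorem theorem5p3:
  fixes M :: "'a measure" and X Y W E :: "'a \<Rightarrow> real" and p \<gamma> :: real
  assumes "prob_space M"
    and indep: "prob_space.indep_vars M (\<lambda>_. borel) (\<lambda>i. [X, Y, W, E] ! i) {..<4}"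
    and nonlattice: "\<not> lattice_law (distr M borel X)"
    and neg: "measure M {\<omega> \<in> space M. X \<omega> < 0} > 0"
    and p: "0 \<le> p" "p < 1"
    and Y1: "measure M {\<omega> \<in> space M. Y \<omega> = 1} = p"
    and Ym1: "measure M {\<omega> \<in> space M. Y \<omega> = -1} = 1 - p"
    and gamma: "\<gamma> > 0"
    and S: "class_S \<gamma> (distr M borel X)"
    and phi: "p * (\<integral>\<omega>. exp (\<gamma> * X \<omega>) \<partial>M) < 1"
    and stat: "distr M borel (\<lambda>\<omega>. max 0 (Y \<omega> * W \<omega> + X \<omega>)) = distr M borel W"
    and Eexp: "distributed M lborel E (exponential_density \<gamma>)"
  shows "(\<lambda>x. measure M {\<omega> \<in> space M. W \<omega> > x})
     \<sim>[at_top] (\<lambda>x. ((1 - p) * p / (1 - p * (\<integral>\<omega>. exp (\<gamma> * X \<omega>) \<partial>M))^2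
              * (measure M {\<omega> \<in> space M. X \<omega> - W \<omega> + E \<omega> \<le> 0}
                 + p / (1 - p) * measure M {\<omega> \<in> space M. X \<omega> + W \<omega> + E \<omega> \<le> 0})
            + (1 - p) / (1 - p * (\<integral>\<omega>. exp (\<gamma> * X \<omega>) \<partial>M))^2
              * (\<integral>\<omega>. exp (- \<gamma> * W \<omega>) \<partial>M))
           * measure M {\<omega> \<in> space M. X \<omega> > x})"
  using reflected_recursion.intro[OF assms(1) indep neg p Y1 Ym1 gamma S phi stat Eexp]
  by (rule reflected_recursion.W_tail_asymp)

end
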